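(* Let $(\mathcal S,\mathcal R)$ be a ringed site and let $N^\bullet=[N^{-1}\to N^0]$ and $M^\bullet=[M^{-1}\to M^0]$ be locally free complexes of $\mathcal R$-modules. Then every butterfly $[N^\bullet,P,M^\bullet]$ in the category of $\mathcal R$-modules is locally split, and its middle object $P$ is locally free (so that it is a locally split butterfly of locally free objects).
   Context: $\mathcal S$ is a site with subcanonical topology and $\mathcal R$ a sheaf of commutative unital rings on $\mathcal S$. A butterfly from $N^\bullet$ to $M^\bullet$ in $\mathcal R$-modules is an $\mathcal R$-module $P$ with $\mathcal R$-linear maps $\kappa\colon N^{-1}\to P$, $\imath\colon M^{-1}\to P$, $\pi\colon P\to N^0$, $\jmath\colon P\to M^0$ such that $\pi\kappa=d_N$, $\jmath\imath=d_M$, $\jmath\kappa=0$ and $0\to M^{-1}\xrightarrow{\imath}P\xrightarrow{\pi}N^0\to0$ is an exact sequence of $\mathcal R$-modules. It is locally split if there is a generalized cover $V$ of the terminal object such that this extension splits in $\mathcal R$-modules after restriction to $V$. An $\mathcal R$-module $M$ is locally free of rank $m$ if there is a generalized cover $Y\to *$ with $M|_Y\cong(\mathcal R|_Y)^m$; a complex is locally free if both its terms are. *)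

theory Defs
  imports "HOL-Algebra.Module"
begin

text \<open>A (small) category with objects in Ob, morphism sets Hom Y X (from Y to X),
  composition cmp g f (first f, then g) and identities idm; together with a
  Grothendieck topology Cov: Cov X is the set of covering sieves on X, where a sieve
  on X is a set of pairs (Y, f) with f in Hom Y X closed under precomposition.\<close>

record ('o, 'a) site =
  Ob  :: "'o set"
  Hom :: "'o \<Rightarrow> 'o \<Rightarrow> 'a set"
  cmp :: "'a \<Rightarrow> 'a \<Rightarrow> 'a"
  idm :: "'o \<Rightarrow> 'a"
  Cov :: "'o \<Rightarrow> ('o \<times> 'a) set set"

definition is_category :: "('o, 'a) site \<Rightarrow> bool" where
  "is_category C \<longleftrightarrow>
     (\<forall>X\<in>Ob C. idm C X \<in> Hom C X X) \<and>
     (\<forall>X\<in>Ob C. \<forall>Y\<in>Ob C. \<forall>Z\<in>Ob C. \<forall>f\<in>Hom C X Y. \<forall>g\<in>Hom C Y Z.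
         cmp C g f \<in> Hom C X Z) \<and>
     (\<forall>X\<in>Ob C. \<forall>Y\<in>Ob C. \<forall>f\<in>Hom C X Y.
         cmp C f (idm C X) = f \<and> cmp C (idm C Y) f = f) \<and>
     (\<forall>W\<in>Ob C. \<forall>X\<in>Ob C. \<forall>Y\<in>Ob C. \<forall>Z\<in>Ob C.
        \<forall>f\<in>Hom C W X. \<forall>g\<in>Hom C X Y. \<forall>h\<in>Hom C Y Z.
         cmp C h (cmp C g f) = cmp C (cmp C h g) f)"

definition max_sieve :: "('o, 'a) site \<Rightarrow> 'o \<Rightarrow> ('o \<times> 'a) set" where
  "max_sieve C X = {(Y, f). Y \<in> Ob C \<and> f \<in> Hom C Y X}"

definition is_sieve :: "('o, 'a) site \<Rightarrow> 'o \<Rightarrow> ('o \<times> 'a) set \<Rightarrow> bool" where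
  "is_sieve C X S \<longleftrightarrow> S \<subseteq> max_sieve C X \<and>
     (\<forall>(Y, f)\<in>S. \<forall>Z\<in>Ob C. \<forall>g\<in>Hom C Z Y. (Z, cmp C f g) \<in> S)"

definition pb_sieve :: "('o, 'a) site \<Rightarrow> ('o \<times> 'a) set \<Rightarrow> 'o \<Rightarrow> 'a \<Rightarrow> ('o \<times> 'a) set" where
  "pb_sieve C S Z h = {(W, g). W \<in> Ob C \<and> g \<in> Hom C W Z \<and> (W, cmp C h g) \<in> S}"

definition is_site :: "('o, 'a) site \<Rightarrow> bool" where
  "is_site C \<longleftrightarrow> is_category C \<and>
     (\<forall>X\<in>Ob C. \<forall>S\<in>Cov C X. is_sieve C X S) \<and>
     (\<forall>X\<in>Ob C. max_sieve C X \<in> Cov C X) \<and>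
     (\<forall>X\<in>Ob C. \<forall>Z\<in>Ob C. \<forall>S\<in>Cov C X. \<forall>h\<in>Hom C Z X. pb_sieve C S Z h \<in> Cov C Z) \<and>
     (\<forall>X\<in>Ob C. \<forall>S\<in>Cov C X. \<forall>R. is_sieve C X R \<longrightarrow>
         (\<forall>(Y, f)\<in>S. pb_sieve C R Y f \<in> Cov C Y) \<longrightarrow> R \<in> Cov C X)"

definition locally :: "('o, 'a) site \<Rightarrow> 'o \<Rightarrow> ('o \<Rightarrow> 'a \<Rightarrow> bool) \<Rightarrow> bool" where
  "locally C X Q \<longleftrightarrow> {(Y, f). Y \<in> Ob C \<and> f \<in> Hom C Y X \<and> Q Y f} \<in> Cov C X"

definition presheaf :: "('o, 'a) site \<Rightarrow> ('o \<Rightarrow> 'x set) \<Rightarrow> ('o \<Rightarrow> 'o \<Rightarrow> 'a \<Rightarrow> 'x \<Rightarrow> 'x) \<Rightarrow> bool" where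
  "presheaf C F rs \<longleftrightarrow>
     (\<forall>X\<in>Ob C. \<forall>Y\<in>Ob C. \<forall>f\<in>Hom C Y X. \<forall>s\<in>F X. rs X Y f s \<in> F Y) \<and>
     (\<forall>X\<in>Ob C. \<forall>s\<in>F X. rs X X (idm C X) s = s) \<and>
     (\<forall>X\<in>Ob C. \<forall>Y\<in>Ob C. \<forall>Z\<in>Ob C. \<forall>f\<in>Hom C Y X. \<forall>g\<in>Hom C Z Y. \<forall>s\<in>F X.
         rs X Z (cmp C f g) s = rs Y Z g (rs X Y f s))"

definition matching_family ::
  "('o, 'a) site \<Rightarrow> ('o \<Rightarrow> 'x set) \<Rightarrow> ('o \<Rightarrow> 'o \<Rightarrow> 'a \<Rightarrow> 'x \<Rightarrow> 'x)
     \<Rightarrow> ('o \<times> 'a) set \<Rightarrow> ('o \<Rightarrow> 'a \<Rightarrow> 'x) \<Rightarrow> bool" where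
  "matching_family C F rs S fam \<longleftrightarrow>
     (\<forall>(Y, f)\<in>S. fam Y f \<in> F Y \<and>
        (\<forall>Z\<in>Ob C. \<forall>g\<in>Hom C Z Y. rs Y Z g (fam Y f) = fam Z (cmp C f g)))"

definition sheaf :: "('o, 'a) site \<Rightarrow> ('o \<Rightarrow> 'x set) \<Rightarrow> ('o \<Rightarrow> 'o \<Rightarrow> 'a \<Rightarrow> 'x \<Rightarrow> 'x) \<Rightarrow> bool" where
  "sheaf C F rs \<longleftrightarrow> presheaf C F rs \<and>
     (\<forall>X\<in>Ob C. \<forall>S\<in>Cov C X. \<forall>fam. matching_family C F rs S fam \<longrightarrow>
        (\<exists>!t. t \<in> F X \<and> (\<forall>(Y, f)\<in>S. rs X Y f t = fam Y f)))"

definition subcanonical :: "('o, 'a) site \<Rightarrow> bool" where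
  "subcanonical C \<longleftrightarrow> (\<forall>X\<in>Ob C. sheaf C (\<lambda>Y. Hom C Y X) (\<lambda>Y Z g f. cmp C f g))"

record ('o, 'a, 'r) ringsheaf =
  rng :: "'o \<Rightarrow> 'r ring"
  rrs :: "'o \<Rightarrow> 'o \<Rightarrow> 'a \<Rightarrow> 'r \<Rightarrow> 'r"

record ('o, 'a, 'r, 'v) modsheaf =
  mdl :: "'o \<Rightarrow> ('r, 'v) module"
  mrs :: "'o \<Rightarrow> 'o \<Rightarrow> 'a \<Rightarrow> 'v \<Rightarrow> 'v"

definition ring_sheaf :: "('o, 'a) site \<Rightarrow> ('o, 'a, 'r) ringsheaf \<Rightarrow> bool" where
  "ring_sheaf C R \<longleftrightarrow>
     (\<forall>X\<in>Ob C. cring (rng R X)) \<and>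
     (\<forall>X\<in>Ob C. \<forall>Y\<in>Ob C. \<forall>f\<in>Hom C Y X. rrs R X Y f \<in> ring_hom (rng R X) (rng R Y)) \<and>
     sheaf C (\<lambda>X. carrier (rng R X)) (rrs R)"

definition module_sheaf ::
  "('o, 'a) site \<Rightarrow> ('o, 'a, 'r) ringsheaf \<Rightarrow> ('o, 'a, 'r, 'v) modsheaf \<Rightarrow> bool" where
  "module_sheaf C R M \<longleftrightarrow>
     (\<forall>X\<in>Ob C. module (rng R X) (mdl M X)) \<and>
     (\<forall>X\<in>Ob C. \<forall>Y\<in>Ob C. \<forall>f\<in>Hom C Y X.
        \<forall>x\<in>carrier (mdl M X). \<forall>y\<in>carrier (mdl M X).
          mrs M X Y f (x \<oplus>\<^bsub>mdl M X\<^esub> y) = mrs M X Y f x \<oplus>\<^bsub>mdl M Y\<^esub> mrs M X Y f y) \<and>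
     (\<forall>X\<in>Ob C. \<forall>Y\<in>Ob C. \<forall>f\<in>Hom C Y X.
        \<forall>a\<in>carrier (rng R X). \<forall>x\<in>carrier (mdl M X).
          mrs M X Y f (a \<odot>\<^bsub>mdl M X\<^esub> x) = rrs R X Y f a \<odot>\<^bsub>mdl M Y\<^esub> mrs M X Y f x) \<and>
     sheaf C (\<lambda>X. carrier (mdl M X)) (mrs M)"

definition linear_map :: "'r ring \<Rightarrow> ('r, 'v) module \<Rightarrow> ('r, 'w) module \<Rightarrow> ('v \<Rightarrow> 'w) \<Rightarrow> bool" where
  "linear_map A M N h \<longleftrightarrow>
     (\<forall>x\<in>carrier M. h x \<in> carrier N) \<and>
     (\<forall>x\<in>carrier M. \<forall>y\<in>carrier M. h (x \<oplus>\<^bsub>M\<^esub> y) = h x \<oplus>\<^bsub>N\<^esub> h y) \<and>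
     (\<forall>a\<in>carrier A. \<forall>x\<in>carrier M. h (a \<odot>\<^bsub>M\<^esub> x) = a \<odot>\<^bsub>N\<^esub> h x)"

definition module_morphism ::
  "('o, 'a) site \<Rightarrow> ('o, 'a, 'r) ringsheaf \<Rightarrow> ('o, 'a, 'r, 'v) modsheaf \<Rightarrow> ('o, 'a, 'r, 'w) modsheaf
     \<Rightarrow> ('o \<Rightarrow> 'v \<Rightarrow> 'w) \<Rightarrow> bool" where
  "module_morphism C R M N h \<longleftrightarrow>
     (\<forall>X\<in>Ob C. linear_map (rng R X) (mdl M X) (mdl N X) (h X)) \<and>
     (\<forall>X\<in>Ob C. \<forall>Y\<in>Ob C. \<forall>f\<in>Hom C Y X. \<forall>s\<in>carrier (mdl M X).
        h Y (mrs M X Y f s) = mrs N X Y f (h X s))"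

text \<open>Short exact sequence 0 \<rightarrow> A \<rightarrow> B \<rightarrow> D \<rightarrow> 0 in the category of sheaves of R-modules:
  i is a monomorphism (sectionwise injective), p \<circ> i = 0, the kernel of p is locally in
  the image of i, and p is an epimorphism of sheaves (locally surjective).\<close>
definition short_exact ::
  "('o, 'a) site \<Rightarrow> ('o, 'a, 'r) ringsheaf \<Rightarrow> ('o, 'a, 'r, 'u) modsheaf \<Rightarrow> ('o, 'a, 'r, 'v) modsheaf
     \<Rightarrow> ('o, 'a, 'r, 'w) modsheaf \<Rightarrow> ('o \<Rightarrow> 'u \<Rightarrow> 'v) \<Rightarrow> ('o \<Rightarrow> 'v \<Rightarrow> 'w) \<Rightarrow> bool" where
  "short_exact C R A B D i p \<longleftrightarrow>
     module_morphism C R A B i \<and> module_morphism C R B D p \<and>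
     (\<forall>X\<in>Ob C. inj_on (i X) (carrier (mdl A X))) \<and>
     (\<forall>X\<in>Ob C. \<forall>s\<in>carrier (mdl A X). p X (i X s) = \<zero>\<^bsub>mdl D X\<^esub>) \<and>
     (\<forall>X\<in>Ob C. \<forall>s\<in>carrier (mdl B X). p X s = \<zero>\<^bsub>mdl D X\<^esub> \<longrightarrow>
        locally C X (\<lambda>Y f. mrs B X Y f s \<in> i Y ` carrier (mdl A Y))) \<and>
     (\<forall>X\<in>Ob C. \<forall>s\<in>carrier (mdl D X).
        locally C X (\<lambda>Y f. mrs D X Y f s \<in> p Y ` carrier (mdl B Y)))"

definition butterfly ::
  "('o, 'a) site \<Rightarrow> ('o, 'a, 'r) ringsheaf
   \<Rightarrow> ('o, 'a, 'r, 'n1) modsheaf \<Rightarrow> ('o, 'a, 'r, 'n0) modsheaf \<Rightarrow> ('o \<Rightarrow> 'n1 \<Rightarrow> 'n0)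
   \<Rightarrow> ('o, 'a, 'r, 'm1) modsheaf \<Rightarrow> ('o, 'a, 'r, 'm0) modsheaf \<Rightarrow> ('o \<Rightarrow> 'm1 \<Rightarrow> 'm0)
   \<Rightarrow> ('o, 'a, 'r, 'p) modsheaf
   \<Rightarrow> ('o \<Rightarrow> 'n1 \<Rightarrow> 'p) \<Rightarrow> ('o \<Rightarrow> 'm1 \<Rightarrow> 'p) \<Rightarrow> ('o \<Rightarrow> 'p \<Rightarrow> 'n0) \<Rightarrow> ('o \<Rightarrow> 'p \<Rightarrow> 'm0) \<Rightarrow> bool" where
  "butterfly C R Nm1 N0 dN Mm1 M0 dM P kap iota pi jay \<longleftrightarrow>
     module_sheaf C R P \<and>
     module_morphism C R Nm1 P kap \<and> module_morphism C R Mm1 P iota \<and>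
     module_morphism C R P N0 pi \<and> module_morphism C R P M0 jay \<and>
     (\<forall>X\<in>Ob C. \<forall>s\<in>carrier (mdl Nm1 X). pi X (kap X s) = dN X s) \<and>
     (\<forall>X\<in>Ob C. \<forall>s\<in>carrier (mdl Mm1 X). jay X (iota X s) = dM X s) \<and>
     (\<forall>X\<in>Ob C. \<forall>s\<in>carrier (mdl Nm1 X). jay X (kap X s) = \<zero>\<^bsub>mdl M0 X\<^esub>) \<and>
     short_exact C R Mm1 P N0 iota pi"

text \<open>A generalized cover of the terminal object, presented by a set \<U> of objects
  (the coproduct of the representables y(U), U \<in> \<U>, maps epimorphically onto *):
  every object is covered by objects admitting a map to some U \<in> \<U>.\<close>
definition gen_cover :: "('o, 'a) site \<Rightarrow> 'o set \<Rightarrow> bool" where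
  "gen_cover C \<U> \<longleftrightarrow> \<U> \<subseteq> Ob C \<and>
     (\<forall>X\<in>Ob C. locally C X (\<lambda>Y f. \<exists>U\<in>\<U>. Hom C Y U \<noteq> {}))"

text \<open>M restricted to C/U is isomorphic to (R restricted to C/U)^m. Since (U, id) is terminal
  in C/U, such an isomorphism is the same as sections e_0,...,e_(m-1) of M over U whose
  restrictions along every u : X \<rightarrow> U form a basis of M(X) over R(X).\<close>
definition free_on :: "('o, 'a) site \<Rightarrow> ('o, 'a, 'r) ringsheaf \<Rightarrow> ('o, 'a, 'r, 'v) modsheaf
     \<Rightarrow> nat \<Rightarrow> 'o \<Rightarrow> bool" where
  "free_on C R M m U \<longleftrightarrow>
     (\<exists>e. (\<forall>i<m. e i \<in> carrier (mdl M U)) \<and>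
        (\<forall>X\<in>Ob C. \<forall>u\<in>Hom C X U. \<forall>s\<in>carrier (mdl M X).
           \<exists>!c. c \<in> {..<m} \<rightarrow>\<^sub>E carrier (rng R X) \<and>
              s = (\<Oplus>\<^bsub>mdl M X\<^esub>i\<in>{..<m}. c i \<odot>\<^bsub>mdl M X\<^esub> mrs M U X u (e i))))"

definition locally_free_rank :: "('o, 'a) site \<Rightarrow> ('o, 'a, 'r) ringsheaf
     \<Rightarrow> ('o, 'a, 'r, 'v) modsheaf \<Rightarrow> nat \<Rightarrow> bool" where
  "locally_free_rank C R M m \<longleftrightarrow> (\<exists>\<U>. gen_cover C \<U> \<and> (\<forall>U\<in>\<U>. free_on C R M m U))"

definition locally_free :: "('o, 'a) site \<Rightarrow> ('o, 'a, 'r) ringsheaf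
     \<Rightarrow> ('o, 'a, 'r, 'v) modsheaf \<Rightarrow> bool" where
  "locally_free C R M \<longleftrightarrow> (\<exists>m. locally_free_rank C R M m)"

text \<open>The extension 0 \<rightarrow> Mm1 \<rightarrow> P \<rightarrow> N0 \<rightarrow> 0 splits in R|_U-modules: there is a morphism
  sig : N0|_U \<rightarrow> P|_U of sheaves of R|_U-modules on C/U with pi \<circ> sig = id.
  Objects of C/U are pairs (X, u) with u : X \<rightarrow> U.\<close>
definition splits_on :: "('o, 'a) site \<Rightarrow> ('o, 'a, 'r) ringsheaf \<Rightarrow> ('o, 'a, 'r, 'p) modsheaf
     \<Rightarrow> ('o, 'a, 'r, 'n0) modsheaf \<Rightarrow> ('o \<Rightarrow> 'p \<Rightarrow> 'n0) \<Rightarrow> 'o \<Rightarrow> bool" where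
  "splits_on C R P N0 pi U \<longleftrightarrow>
     (\<exists>sig. (\<forall>X\<in>Ob C. \<forall>u\<in>Hom C X U.
               linear_map (rng R X) (mdl N0 X) (mdl P X) (sig X u) \<and>
               (\<forall>s\<in>carrier (mdl N0 X). pi X (sig X u s) = s)) \<and>
            (\<forall>X\<in>Ob C. \<forall>Y\<in>Ob C. \<forall>u\<in>Hom C X U. \<forall>g\<in>Hom C Y X. \<forall>s\<in>carrier (mdl N0 X).
               sig Y (cmp C u g) (mrs N0 X Y g s) = mrs P X Y g (sig X u s)))"

definition locally_split_butterfly :: "('o, 'a) site \<Rightarrow> ('o, 'a, 'r) ringsheaf
     \<Rightarrow> ('o, 'a, 'r, 'p) modsheaf \<Rightarrow> ('o, 'a, 'r, 'n0) modsheaf \<Rightarrow> ('o \<Rightarrow> 'p \<Rightarrow> 'n0) \<Rightarrow> bool" where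
  "locally_split_butterfly C R P N0 pi \<longleftrightarrow>
     (\<exists>\<U>. gen_cover C \<U> \<and> (\<forall>U\<in>\<U>. splits_on C R P N0 pi U))"

end

theory Submission
  imports Defs
begin

text \<open>On a generalized cover where \<open>N\<^sup>0\<close> is free, each of the finitely many basis
  sections of \<open>N\<^sup>0\<close> lifts along the epimorphism \<open>\<pi>\<close> after a further refinement, and
  extending the lifts linearly gives a section of \<open>\<pi>\<close>: the extension
  \<open>0 \<rightarrow> M\<^sup>-\<^sup>1 \<rightarrow> P \<rightarrow> N\<^sup>0 \<rightarrow> 0\<close> splits there. Where moreover \<open>M\<^sup>-\<^sup>1\<close> is free, the images
  of a basis of \<open>M\<^sup>-\<^sup>1\<close> together with the lifts form a basis of \<open>P\<close>: the coordinates along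
  \<open>N\<^sup>0\<close> are read off after applying \<open>\<pi>\<close>, and the remainder lies in the kernel of \<open>\<pi>\<close>,
  which is the image of \<open>\<iota>\<close> because local preimages under the monomorphism \<open>\<iota>\<close> glue.\<close>

section \<open>Covering sieves and generalized covers\<close>

lemma site_is_category: "is_site C \<Longrightarrow> is_category C"
  unfolding is_site_def by blast

lemma site_cmp_in_Hom:
  assumes "is_site C" "X \<in> Ob C" "Y \<in> Ob C" "Z \<in> Ob C" "f \<in> Hom C X Y" "g \<in> Hom C Y Z"
  shows "cmp C g f \<in> Hom C X Z"
  using site_is_category[OF assms(1)] assms(2-) unfolding is_category_def by blast

lemma site_idm_in_Hom: "is_site C \<Longrightarrow> X \<in> Ob C \<Longrightarrow> idm C X \<in> Hom C X X"
  using site_is_category unfolding is_category_def by blast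

lemma site_Cov_is_sieve: "is_site C \<Longrightarrow> X \<in> Ob C \<Longrightarrow> S \<in> Cov C X \<Longrightarrow> is_sieve C X S"
  unfolding is_site_def by blast

lemma site_max_sieve_in_Cov: "is_site C \<Longrightarrow> X \<in> Ob C \<Longrightarrow> max_sieve C X \<in> Cov C X"
  unfolding is_site_def by blast

lemma site_pb_sieve_in_Cov:
  "is_site C \<Longrightarrow> X \<in> Ob C \<Longrightarrow> Z \<in> Ob C \<Longrightarrow> S \<in> Cov C X \<Longrightarrow> h \<in> Hom C Z X \<Longrightarrow>
    pb_sieve C S Z h \<in> Cov C Z"
  unfolding is_site_def by blast

lemma site_Cov_transitive:
  assumes "is_site C" "X \<in> Ob C" "S \<in> Cov C X" "is_sieve C X R"
    and "\<And>Y f. (Y, f) \<in> S \<Longrightarrow> pb_sieve C R Y f \<in> Cov C Y"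
  shows "R \<in> Cov C X"
  using assms unfolding is_site_def by blast

lemma is_sieveD:
  assumes "is_sieve C X S" "(Y, f) \<in> S"
  shows "Y \<in> Ob C" "f \<in> Hom C Y X"
    "\<And>Z g. Z \<in> Ob C \<Longrightarrow> g \<in> Hom C Z Y \<Longrightarrow> (Z, cmp C f g) \<in> S"
  using assms unfolding is_sieve_def max_sieve_def by blast+

lemma is_sieveI:
  assumes "\<And>Y f. (Y, f) \<in> S \<Longrightarrow> Y \<in> Ob C \<and> f \<in> Hom C Y X"
    and "\<And>Y f Z g. (Y, f) \<in> S \<Longrightarrow> Z \<in> Ob C \<Longrightarrow> g \<in> Hom C Z Y \<Longrightarrow> (Z, cmp C f g) \<in> S"
  shows "is_sieve C X S"
  unfolding is_sieve_def max_sieve_def using assms by auto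

lemma Cov_mono:
  assumes site: "is_site C" and X: "X \<in> Ob C" and S: "S \<in> Cov C X"
    and R: "is_sieve C X R" and "S \<subseteq> R"
  shows "R \<in> Cov C X"
proof (rule site_Cov_transitive[OF site X S R])
  fix Y f assume "(Y, f) \<in> S"
  then have Y: "Y \<in> Ob C" and "(Y, f) \<in> R"
    using is_sieveD[OF site_Cov_is_sieve[OF site X S]] \<open>S \<subseteq> R\<close> by auto
  then have "pb_sieve C R Y f = max_sieve C Y"
    using is_sieveD(3)[OF R] unfolding pb_sieve_def max_sieve_def by auto
  then show "pb_sieve C R Y f \<in> Cov C Y" using site_max_sieve_in_Cov[OF site Y] by simp
qed

lemma Cov_Int:
  assumes site: "is_site C" and X: "X \<in> Ob C" and S1: "S1 \<in> Cov C X" and S2: "S2 \<in> Cov C X"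
  shows "S1 \<inter> S2 \<in> Cov C X"
proof (rule site_Cov_transitive[OF site X S1])
  note sv1 = is_sieveD[OF site_Cov_is_sieve[OF site X S1]]
    and sv2 = is_sieveD[OF site_Cov_is_sieve[OF site X S2]]
  show "is_sieve C X (S1 \<inter> S2)" by (rule is_sieveI) (use sv1 sv2 in blast)+
  fix Y f assume YS: "(Y, f) \<in> S1"
  then have "pb_sieve C (S1 \<inter> S2) Y f = pb_sieve C S2 Y f"
    unfolding pb_sieve_def using sv1(3) by auto
  then show "pb_sieve C (S1 \<inter> S2) Y f \<in> Cov C Y"
    using site_pb_sieve_in_Cov[OF site X _ S2] sv1(1,2)[OF YS] by simp
qed

lemma locally_conjI:
  assumes "is_site C" "X \<in> Ob C" "locally C X Q1" "locally C X Q2"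
  shows "locally C X (\<lambda>Y f. Q1 Y f \<and> Q2 Y f)"
proof -
  have "{(Y, f). Y \<in> Ob C \<and> f \<in> Hom C Y X \<and> Q1 Y f \<and> Q2 Y f} =
     {(Y, f). Y \<in> Ob C \<and> f \<in> Hom C Y X \<and> Q1 Y f} \<inter> {(Y, f). Y \<in> Ob C \<and> f \<in> Hom C Y X \<and> Q2 Y f}"
    by blast
  then show ?thesis using assms Cov_Int unfolding locally_def by simp
qed

lemma locally_all_lessI:
  fixes m :: nat
  assumes site: "is_site C" and X: "X \<in> Ob C" and "\<And>i. i < m \<Longrightarrow> locally C X (Q i)"
  shows "locally C X (\<lambda>Y f. \<forall>i<m. Q i Y f)"
  using assms(3)
proof (induction m)
  case 0
  have "{(Y, f). Y \<in> Ob C \<and> f \<in> Hom C Y X \<and> (\<forall>i<0::nat. Q i Y f)} = max_sieve C X"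
    unfolding max_sieve_def by auto
  then show ?case using site_max_sieve_in_Cov[OF site X] unfolding locally_def by simp
next
  case (Suc m)
  have "locally C X (\<lambda>Y f. (\<forall>i<m. Q i Y f) \<and> Q m Y f)"
    using Suc by (intro locally_conjI[OF site X]) auto
  moreover have "(\<lambda>Y f. (\<forall>i<m. Q i Y f) \<and> Q m Y f) = (\<lambda>Y f. \<forall>i<Suc m. Q i Y f)"
    by (auto simp: less_Suc_eq)
  ultimately show ?case by simp
qed

lemma locally_pullback:
  assumes site: "is_site C" and X: "X \<in> Ob C" and Y: "Y \<in> Ob C" and h: "h \<in> Hom C Y X"
    and "locally C X Q"
  shows "locally C Y (\<lambda>Z g. Q Z (cmp C h g))"
proof -
  let ?S = "{(Z, g). Z \<in> Ob C \<and> g \<in> Hom C Z X \<and> Q Z g}"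
  have "pb_sieve C ?S Y h = {(Z, g). Z \<in> Ob C \<and> g \<in> Hom C Z Y \<and> Q Z (cmp C h g)}"
    unfolding pb_sieve_def using site_cmp_in_Hom[OF site _ Y X _ h] by auto
  moreover have "pb_sieve C ?S Y h \<in> Cov C Y"
    using site_pb_sieve_in_Cov[OF site X Y _ h] \<open>locally C X Q\<close> unfolding locally_def by blast
  ultimately show ?thesis unfolding locally_def by simp
qed

lemma locally_sieve_is_sieve:
  assumes site: "is_site C" and X: "X \<in> Ob C"
    and closed: "\<And>Y f Z g. Y \<in> Ob C \<Longrightarrow> f \<in> Hom C Y X \<Longrightarrow> Q Y f \<Longrightarrow> Z \<in> Ob C \<Longrightarrow>
      g \<in> Hom C Z Y \<Longrightarrow> Q Z (cmp C f g)"
  shows "is_sieve C X {(Y, f). Y \<in> Ob C \<and> f \<in> Hom C Y X \<and> Q Y f}"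
proof (rule is_sieveI)
  fix Y f Z g assume "(Y, f) \<in> {(Y, f). Y \<in> Ob C \<and> f \<in> Hom C Y X \<and> Q Y f}"
    and Z: "Z \<in> Ob C" and g: "g \<in> Hom C Z Y"
  then have Y: "Y \<in> Ob C" and f: "f \<in> Hom C Y X" and "Q Y f" by auto
  then show "(Z, cmp C f g) \<in> {(Y, f). Y \<in> Ob C \<and> f \<in> Hom C Y X \<and> Q Y f}"
    using closed[OF Y f _ Z g] site_cmp_in_Hom[OF site Z Y X g f] Z by blast
qed blast

lemma locally_mono:
  assumes site: "is_site C" and X: "X \<in> Ob C" and "locally C X Q"
    and "\<And>Y f. Y \<in> Ob C \<Longrightarrow> f \<in> Hom C Y X \<Longrightarrow> Q Y f \<Longrightarrow> Q' Y f"
    and "\<And>Y f Z g. Y \<in> Ob C \<Longrightarrow> f \<in> Hom C Y X \<Longrightarrow> Q' Y f \<Longrightarrow> Z \<in> Ob C \<Longrightarrow>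
      g \<in> Hom C Z Y \<Longrightarrow> Q' Z (cmp C f g)"
  shows "locally C X Q'"
proof -
  have cov: "{(Y, f). Y \<in> Ob C \<and> f \<in> Hom C Y X \<and> Q Y f} \<in> Cov C X"
    using assms(3) unfolding locally_def .
  have sub: "{(Y, f). Y \<in> Ob C \<and> f \<in> Hom C Y X \<and> Q Y f}
      \<subseteq> {(Y, f). Y \<in> Ob C \<and> f \<in> Hom C Y X \<and> Q' Y f}"
    using assms(4) by auto
  show ?thesis
    using Cov_mono[OF site X cov locally_sieve_is_sieve[where Q = Q', OF site X assms(5)] sub]
    unfolding locally_def .
qed

lemma locally_trans:
  assumes site: "is_site C" and X: "X \<in> Ob C" and "locally C X Q"
    and loc: "\<And>Y f. Y \<in> Ob C \<Longrightarrow> f \<in> Hom C Y X \<Longrightarrow> Q Y f \<Longrightarrow>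
      locally C Y (\<lambda>Z g. Q' Z (cmp C f g))"
    and closed: "\<And>Y f Z g. Y \<in> Ob C \<Longrightarrow> f \<in> Hom C Y X \<Longrightarrow> Q' Y f \<Longrightarrow> Z \<in> Ob C \<Longrightarrow>
      g \<in> Hom C Z Y \<Longrightarrow> Q' Z (cmp C f g)"
  shows "locally C X Q'"
  unfolding locally_def
proof (rule site_Cov_transitive[OF site X _ locally_sieve_is_sieve[where Q = Q', OF site X closed]])
  show "{(Y, f). Y \<in> Ob C \<and> f \<in> Hom C Y X \<and> Q Y f} \<in> Cov C X"
    using \<open>locally C X Q\<close> unfolding locally_def .
  fix Y f assume "(Y, f) \<in> {(Y, f). Y \<in> Ob C \<and> f \<in> Hom C Y X \<and> Q Y f}"
  then have Y: "Y \<in> Ob C" and f: "f \<in> Hom C Y X" and "Q Y f" by auto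
  have "pb_sieve C {(Y, f). Y \<in> Ob C \<and> f \<in> Hom C Y X \<and> Q' Y f} Y f
      = {(Z, g). Z \<in> Ob C \<and> g \<in> Hom C Z Y \<and> Q' Z (cmp C f g)}"
    unfolding pb_sieve_def using site_cmp_in_Hom[OF site _ Y X _ f] by auto
  then show "pb_sieve C {(Y, f). Y \<in> Ob C \<and> f \<in> Hom C Y X \<and> Q' Y f} Y f \<in> Cov C Y"
    using loc[OF Y f \<open>Q Y f\<close>] unfolding locally_def by simp
qed

lemma gen_cover_refine:
  assumes site: "is_site C" and cover: "gen_cover C \<U>" and VOb: "\<V> \<subseteq> Ob C"
    and loc: "\<And>U. U \<in> \<U> \<Longrightarrow> locally C U (Q U)"
    and into: "\<And>U Y f. U \<in> \<U> \<Longrightarrow> Y \<in> Ob C \<Longrightarrow> f \<in> Hom C Y U \<Longrightarrow> Q U Y f \<Longrightarrow> Y \<in> \<V>"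
  shows "gen_cover C \<V>"
  unfolding gen_cover_def
proof (intro conjI ballI VOb)
  have UOb: "\<U> \<subseteq> Ob C" using cover unfolding gen_cover_def by blast
  have hits_closed: "\<exists>V\<in>\<V>. Hom C Z V \<noteq> {}"
    if hit: "\<exists>V\<in>\<V>. Hom C Y V \<noteq> {}" and Y: "Y \<in> Ob C" and Z: "Z \<in> Ob C" and g: "g \<in> Hom C Z Y"
    for Y Z g
  proof -
    obtain V k where "V \<in> \<V>" "k \<in> Hom C Y V" using hit by blast
    then have "cmp C k g \<in> Hom C Z V" using site_cmp_in_Hom[OF site Z Y _ g] VOb by blast
    then show ?thesis using \<open>V \<in> \<V>\<close> by blast
  qed
  fix X assume X: "X \<in> Ob C"
  show "locally C X (\<lambda>Y f. \<exists>V\<in>\<V>. Hom C Y V \<noteq> {})"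
  proof (rule locally_trans[OF site X])
    show "locally C X (\<lambda>Y f. \<exists>U\<in>\<U>. Hom C Y U \<noteq> {})" using cover X unfolding gen_cover_def by blast
  next
    fix Y f assume Y: "Y \<in> Ob C" and "\<exists>U\<in>\<U>. Hom C Y U \<noteq> {}"
    then obtain U h where U: "U \<in> \<U>" and h: "h \<in> Hom C Y U" by blast
    have UO: "U \<in> Ob C" using U UOb by blast
    have "locally C Y (\<lambda>Z g. Q U Z (cmp C h g))"
      by (rule locally_pullback[OF site UO Y h loc[OF U]])
    then show "locally C Y (\<lambda>Z g. \<exists>V\<in>\<V>. Hom C Z V \<noteq> {})"
    proof (rule locally_mono[OF site Y])
      fix Z g assume Z: "Z \<in> Ob C" and g: "g \<in> Hom C Z Y" and "Q U Z (cmp C h g)"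
      then have "Z \<in> \<V>" using into[OF U Z site_cmp_in_Hom[OF site Z Y UO g h]] by blast
      then show "\<exists>V\<in>\<V>. Hom C Z V \<noteq> {}" using site_idm_in_Hom[OF site Z] by blast
    qed (rule hits_closed)
  qed (rule hits_closed)
qed

lemma gen_cover_saturate:
  assumes site: "is_site C" and cover: "gen_cover C \<U>" and base: "\<And>U. U \<in> \<U> \<Longrightarrow> Q U"
    and hered: "\<And>U Y f. U \<in> Ob C \<Longrightarrow> Y \<in> Ob C \<Longrightarrow> f \<in> Hom C Y U \<Longrightarrow> Q U \<Longrightarrow> Q Y"
  shows "gen_cover C {Y \<in> Ob C. Q Y}"
proof (rule gen_cover_refine[OF site cover, where Q = "\<lambda>_ _ _. True"])
  have UOb: "\<U> \<subseteq> Ob C" using cover unfolding gen_cover_def by blast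
  fix U assume "U \<in> \<U>"
  then show "locally C U (\<lambda>_ _. True)"
    using site_max_sieve_in_Cov[OF site] UOb unfolding locally_def max_sieve_def by auto
  fix Y f assume "Y \<in> Ob C" "f \<in> Hom C Y U"
  then show "Y \<in> {Y \<in> Ob C. Q Y}" using hered[of U Y f] base[OF \<open>U \<in> \<U>\<close>] \<open>U \<in> \<U>\<close> UOb by blast
qed blast

lemma gen_cover_Int:
  assumes site: "is_site C"
    and cover1: "gen_cover C {Y \<in> Ob C. Q1 Y}" and cover2: "gen_cover C {Y \<in> Ob C. Q2 Y}"
    and hered1: "\<And>U Y f. U \<in> Ob C \<Longrightarrow> Y \<in> Ob C \<Longrightarrow> f \<in> Hom C Y U \<Longrightarrow> Q1 U \<Longrightarrow> Q1 Y"
    and hered2: "\<And>U Y f. U \<in> Ob C \<Longrightarrow> Y \<in> Ob C \<Longrightarrow> f \<in> Hom C Y U \<Longrightarrow> Q2 U \<Longrightarrow> Q2 Y"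
  shows "gen_cover C {Y \<in> Ob C. Q1 Y \<and> Q2 Y}"
proof (rule gen_cover_refine[OF site cover1, where Q = "\<lambda>_ Y _. \<exists>V\<in>{Y \<in> Ob C. Q2 Y}. Hom C Y V \<noteq> {}"])
  fix U assume "U \<in> {Y \<in> Ob C. Q1 Y}"
  then show "locally C U (\<lambda>Y _. \<exists>V\<in>{Y \<in> Ob C. Q2 Y}. Hom C Y V \<noteq> {})"
    using cover2 unfolding gen_cover_def by blast
  fix Y f assume "Y \<in> Ob C" "f \<in> Hom C Y U" "\<exists>V\<in>{Y \<in> Ob C. Q2 Y}. Hom C Y V \<noteq> {}"
  then show "Y \<in> {Y \<in> Ob C. Q1 Y \<and> Q2 Y}"
    using hered1[of U Y f] hered2 \<open>U \<in> {Y \<in> Ob C. Q1 Y}\<close> by blast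
qed blast

section \<open>Finite bases of modules\<close>

definition lincomb :: "('r, 'v, 'x) module_scheme \<Rightarrow> nat \<Rightarrow> (nat \<Rightarrow> 'r) \<Rightarrow> (nat \<Rightarrow> 'v) \<Rightarrow> 'v" where
  "lincomb M m c v = (\<Oplus>\<^bsub>M\<^esub>i\<in>{..<m}. c i \<odot>\<^bsub>M\<^esub> v i)"

context module
begin

lemma lincomb_closed:
  "c \<in> {..<m} \<rightarrow> carrier R \<Longrightarrow> v \<in> {..<m} \<rightarrow> carrier M \<Longrightarrow> lincomb M m c v \<in> carrier M"
  unfolding lincomb_def by (intro finsum_closed) (auto simp: Pi_iff)

lemma lincomb_0 [simp]: "lincomb M 0 c v = \<zero>\<^bsub>M\<^esub>"
  unfolding lincomb_def by simp

lemma lincomb_Suc: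
  "c \<in> {..<Suc m} \<rightarrow> carrier R \<Longrightarrow> v \<in> {..<Suc m} \<rightarrow> carrier M \<Longrightarrow>
    lincomb M (Suc m) c v = c m \<odot>\<^bsub>M\<^esub> v m \<oplus>\<^bsub>M\<^esub> lincomb M m c v"
  unfolding lincomb_def lessThan_Suc by (subst finsum_insert) (auto simp: Pi_iff)

lemma lincomb_cong:
  assumes "c' \<in> {..<m} \<rightarrow> carrier R" "v' \<in> {..<m} \<rightarrow> carrier M"
    and "\<And>i. i < m \<Longrightarrow> c i = c' i" "\<And>i. i < m \<Longrightarrow> v i = v' i"
  shows "lincomb M m c v = lincomb M m c' v'"
  unfolding lincomb_def using assms by (intro finsum_cong') (auto simp: Pi_iff)

lemma lincomb_add:
  assumes "c \<in> {..<m} \<rightarrow> carrier R" "d \<in> {..<m} \<rightarrow> carrier R" "v \<in> {..<m} \<rightarrow> carrier M"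
  shows "lincomb M m (\<lambda>i. c i \<oplus>\<^bsub>R\<^esub> d i) v = lincomb M m c v \<oplus>\<^bsub>M\<^esub> lincomb M m d v"
proof -
  have "lincomb M m (\<lambda>i. c i \<oplus>\<^bsub>R\<^esub> d i) v = (\<Oplus>\<^bsub>M\<^esub>i\<in>{..<m}. c i \<odot>\<^bsub>M\<^esub> v i \<oplus>\<^bsub>M\<^esub> d i \<odot>\<^bsub>M\<^esub> v i)"
    unfolding lincomb_def using assms by (intro finsum_cong') (auto simp: smult_l_distr Pi_iff)
  also have "\<dots> = lincomb M m c v \<oplus>\<^bsub>M\<^esub> lincomb M m d v"
    unfolding lincomb_def using assms by (intro finsum_addf) (auto simp: Pi_iff)
  finally show ?thesis .
qed

lemma lincomb_smult:
  assumes "a \<in> carrier R" "c \<in> {..<m} \<rightarrow> carrier R" "v \<in> {..<m} \<rightarrow> carrier M"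
  shows "a \<odot>\<^bsub>M\<^esub> lincomb M m c v = lincomb M m (\<lambda>i. a \<otimes>\<^bsub>R\<^esub> c i) v"
proof -
  have "a \<odot>\<^bsub>M\<^esub> lincomb M m c v = (\<Oplus>\<^bsub>M\<^esub>i\<in>{..<m}. a \<odot>\<^bsub>M\<^esub> (c i \<odot>\<^bsub>M\<^esub> v i))"
    unfolding lincomb_def using assms by (intro finsum_smult_ldistr) (auto simp: Pi_iff)
  also have "\<dots> = lincomb M m (\<lambda>i. a \<otimes>\<^bsub>R\<^esub> c i) v"
    unfolding lincomb_def using assms by (intro finsum_cong') (auto simp: smult_assoc1 Pi_iff)
  finally show ?thesis .
qed

lemma lincomb_append:
  assumes "c \<in> {..<m1 + m0} \<rightarrow> carrier R" "v \<in> {..<m1 + m0} \<rightarrow> carrier M"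
  shows "lincomb M (m1 + m0) c v
    = lincomb M m1 c v \<oplus>\<^bsub>M\<^esub> lincomb M m0 (\<lambda>j. c (m1 + j)) (\<lambda>j. v (m1 + j))"
proof -
  have "k \<in> (\<lambda>j. m1 + j) ` {..<m0}" if "\<not> k < m1" "k < m1 + m0" for k
    using that by (intro image_eqI[of _ _ "k - m1"]) auto
  then have split: "{..<m1 + m0} = {..<m1} \<union> (\<lambda>j. m1 + j) ` {..<m0}"
    by fastforce
  have "lincomb M (m1 + m0) c v
      = lincomb M m1 c v \<oplus>\<^bsub>M\<^esub> (\<Oplus>\<^bsub>M\<^esub>k\<in>(\<lambda>j. m1 + j) ` {..<m0}. c k \<odot>\<^bsub>M\<^esub> v k)"
    unfolding lincomb_def split using assms by (intro finsum_Un_disjoint) (auto simp: Pi_iff)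
  also have "(\<Oplus>\<^bsub>M\<^esub>k\<in>(\<lambda>j. m1 + j) ` {..<m0}. c k \<odot>\<^bsub>M\<^esub> v k)
      = lincomb M m0 (\<lambda>j. c (m1 + j)) (\<lambda>j. v (m1 + j))"
    unfolding lincomb_def using assms by (subst finsum_reindex) (auto simp: Pi_iff)
  finally show ?thesis .
qed

end

lemma linear_mapD:
  assumes "linear_map A M N h"
  shows "x \<in> carrier M \<Longrightarrow> h x \<in> carrier N"
    and "x \<in> carrier M \<Longrightarrow> y \<in> carrier M \<Longrightarrow> h (x \<oplus>\<^bsub>M\<^esub> y) = h x \<oplus>\<^bsub>N\<^esub> h y"
    and "a \<in> carrier A \<Longrightarrow> x \<in> carrier M \<Longrightarrow> h (a \<odot>\<^bsub>M\<^esub> x) = a \<odot>\<^bsub>N\<^esub> h x"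
  using assms unfolding linear_map_def by blast+

text \<open>Restriction of sections is only linear over the restriction of scalars \<open>\<phi>\<close>.\<close>

lemma semilinear_lincomb:
  assumes M: "module A M" and N: "module B N"
    and closed: "\<And>x. x \<in> carrier M \<Longrightarrow> h x \<in> carrier N"
    and add: "\<And>x y. x \<in> carrier M \<Longrightarrow> y \<in> carrier M \<Longrightarrow> h (x \<oplus>\<^bsub>M\<^esub> y) = h x \<oplus>\<^bsub>N\<^esub> h y"
    and smult: "\<And>a x. a \<in> carrier A \<Longrightarrow> x \<in> carrier M \<Longrightarrow> h (a \<odot>\<^bsub>M\<^esub> x) = \<phi> a \<odot>\<^bsub>N\<^esub> h x"
    and scalar: "\<And>a. a \<in> carrier A \<Longrightarrow> \<phi> a \<in> carrier B"
    and c: "c \<in> {..<m} \<rightarrow> carrier A" and v: "v \<in> {..<m} \<rightarrow> carrier M"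
  shows "h (lincomb M m c v) = lincomb N m (\<lambda>i. \<phi> (c i)) (\<lambda>i. h (v i))"
  using c v
proof (induction m)
  interpret M: module A M by fact
  interpret N: module B N by fact
  case 0
  have "h \<zero>\<^bsub>M\<^esub> \<oplus>\<^bsub>N\<^esub> h \<zero>\<^bsub>M\<^esub> = h \<zero>\<^bsub>M\<^esub> \<oplus>\<^bsub>N\<^esub> \<zero>\<^bsub>N\<^esub>"
    using add[of "\<zero>\<^bsub>M\<^esub>" "\<zero>\<^bsub>M\<^esub>"] closed[of "\<zero>\<^bsub>M\<^esub>"] by simp
  then show ?case using closed[of "\<zero>\<^bsub>M\<^esub>"] by (simp add: N.add.l_cancel_one')
next
  interpret M: module A M by fact
  interpret N: module B N by fact
  case (Suc m)
  then show ?case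
    using M.lincomb_closed[of c m v] closed scalar
    by (simp add: M.lincomb_Suc N.lincomb_Suc add smult Pi_iff)
qed

lemma linear_map_lincomb:
  assumes "module A M" "module A N" "linear_map A M N h"
    and "c \<in> {..<m} \<rightarrow> carrier A" "v \<in> {..<m} \<rightarrow> carrier M"
  shows "h (lincomb M m c v) = lincomb N m c (\<lambda>i. h (v i))"
  using semilinear_lincomb[where \<phi> = "\<lambda>a. a", OF assms(1,2) linear_mapD[OF assms(3)] _ assms(4,5)]
  by simp

lemma linear_map_minus:
  assumes M: "module A M" and N: "module A N" and h: "linear_map A M N h"
    and "x \<in> carrier M" "y \<in> carrier M"
  shows "h (x \<ominus>\<^bsub>M\<^esub> y) = h x \<ominus>\<^bsub>N\<^esub> h y"
proof -
  interpret M: module A M by fact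
  interpret N: module A N by fact
  have "x \<ominus>\<^bsub>M\<^esub> y = x \<oplus>\<^bsub>M\<^esub> (\<ominus>\<^bsub>A\<^esub> \<one>\<^bsub>A\<^esub>) \<odot>\<^bsub>M\<^esub> y"
    using assms(4,5) by (simp add: M.smult_l_minus M.minus_eq)
  then show ?thesis
    using assms(4,5) linear_mapD[OF h]
    by (simp add: N.smult_l_minus N.minus_eq)
qed

text \<open>Coefficient families are extensional, so that they are unique as functions; this is
  the fibrewise form of \<open>free_on\<close>.\<close>

definition is_basis :: "('r, 'x) ring_scheme \<Rightarrow> ('r, 'v, 'y) module_scheme \<Rightarrow> nat \<Rightarrow> (nat \<Rightarrow> 'v) \<Rightarrow> bool" where
  "is_basis A M m v \<longleftrightarrow> v \<in> {..<m} \<rightarrow> carrier M \<and>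
     (\<forall>s\<in>carrier M. \<exists>!c. c \<in> {..<m} \<rightarrow>\<^sub>E carrier A \<and> s = lincomb M m c v)"

definition coords :: "('r, 'x) ring_scheme \<Rightarrow> ('r, 'v, 'y) module_scheme \<Rightarrow> nat \<Rightarrow> (nat \<Rightarrow> 'v) \<Rightarrow> 'v \<Rightarrow> nat \<Rightarrow> 'r" where
  "coords A M m v s = (THE c. c \<in> {..<m} \<rightarrow>\<^sub>E carrier A \<and> s = lincomb M m c v)"

context module
begin

lemma is_basisI:
  assumes v: "v \<in> {..<m} \<rightarrow> carrier M"
    and span: "\<And>s. s \<in> carrier M \<Longrightarrow> \<exists>c \<in> {..<m} \<rightarrow> carrier R. s = lincomb M m c v"
    and indep: "\<And>c c' i. c \<in> {..<m} \<rightarrow> carrier R \<Longrightarrow> c' \<in> {..<m} \<rightarrow> carrier R \<Longrightarrow>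
      lincomb M m c v = lincomb M m c' v \<Longrightarrow> i < m \<Longrightarrow> c i = c' i"
  shows "is_basis R M m v"
  unfolding is_basis_def
proof (intro conjI v ballI)
  fix s assume "s \<in> carrier M"
  then obtain c where c: "c \<in> {..<m} \<rightarrow> carrier R" and s: "s = lincomb M m c v" using span by blast
  have s': "s = lincomb M m (restrict c {..<m}) v"
    unfolding s by (rule lincomb_cong[OF _ v]) (use c in auto)
  show "\<exists>!c. c \<in> {..<m} \<rightarrow>\<^sub>E carrier R \<and> s = lincomb M m c v"
  proof (rule ex1I[of _ "restrict c {..<m}"])
    show "restrict c {..<m} \<in> {..<m} \<rightarrow>\<^sub>E carrier R \<and> s = lincomb M m (restrict c {..<m}) v"
      using c s' by auto
    fix c' assume c': "c' \<in> {..<m} \<rightarrow>\<^sub>E carrier R \<and> s = lincomb M m c' v"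
    have "c' i = c i" if "i < m" for i
      using indep[of c' "restrict c {..<m}" i] c' c s' that by (auto simp: PiE_iff)
    then show "c' = restrict c {..<m}" using c' by (intro PiE_ext[of c' "{..<m}"]) auto
  qed
qed

lemma is_basis_cong:
  assumes "\<And>i. i < m \<Longrightarrow> v i = v' i"
  shows "is_basis R M m v \<longleftrightarrow> is_basis R M m v'"
proof (cases "v' \<in> {..<m} \<rightarrow> carrier M")
  case True
  have eq: "lincomb M m c v = lincomb M m c v'" if c: "c \<in> {..<m} \<rightarrow>\<^sub>E carrier R" for c
  proof (rule lincomb_cong[OF _ True])
    show "c \<in> {..<m} \<rightarrow> carrier R" using c by (simp add: PiE_iff)
  qed (simp_all add: assms)
  have "v \<in> {..<m} \<rightarrow> carrier M" using True assms by (simp add: Pi_iff)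
  then show ?thesis using True unfolding is_basis_def by (simp add: eq cong: conj_cong)
next
  case False
  then have "v \<notin> {..<m} \<rightarrow> carrier M" using assms by (simp add: Pi_iff)
  then show ?thesis using False unfolding is_basis_def by simp
qed

lemma is_basis_transfer:
  "is_basis R M m v \<Longrightarrow> (\<And>i. i < m \<Longrightarrow> v i = v' i) \<Longrightarrow> is_basis R M m v'"
  using is_basis_cong[of m v v'] by blast

context
  fixes m v assumes basis: "is_basis R M m v"
begin

lemma basis_closed: "v \<in> {..<m} \<rightarrow> carrier M"
  using basis unfolding is_basis_def by blast

lemma coords_PiE: "s \<in> carrier M \<Longrightarrow> coords R M m v s \<in> {..<m} \<rightarrow>\<^sub>E carrier R"
  and lincomb_coords: "s \<in> carrier M \<Longrightarrow> lincomb M m (coords R M m v s) v = s"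
  using theI'[of "\<lambda>c. c \<in> {..<m} \<rightarrow>\<^sub>E carrier R \<and> s = lincomb M m c v"] basis
  unfolding is_basis_def coords_def by auto

lemma coords_in_carrier: "s \<in> carrier M \<Longrightarrow> coords R M m v s \<in> {..<m} \<rightarrow> carrier R"
  using coords_PiE by (auto simp: PiE_iff)

lemma coords_lincomb:
  assumes c: "c \<in> {..<m} \<rightarrow> carrier R" and "i < m"
  shows "coords R M m v (lincomb M m c v) i = c i"
proof -
  have s: "lincomb M m c v \<in> carrier M" by (rule lincomb_closed[OF c basis_closed])
  have "lincomb M m c v = lincomb M m (restrict c {..<m}) v"
    by (rule lincomb_cong[OF _ basis_closed]) (use c in auto)
  then have "coords R M m v (lincomb M m c v) = restrict c {..<m}"
    unfolding coords_def using c basis s unfolding is_basis_def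
    by (intro the1_equality) (auto simp: Pi_iff)
  then show ?thesis using \<open>i < m\<close> by simp
qed

lemma basis_coeffs_eq:
  assumes "c \<in> {..<m} \<rightarrow> carrier R" "c' \<in> {..<m} \<rightarrow> carrier R"
    and "lincomb M m c v = lincomb M m c' v" and "i < m"
  shows "c i = c' i"
  using coords_lincomb[OF assms(1,4)] coords_lincomb[OF assms(2,4)] assms(3) by simp

lemma coords_add:
  assumes s: "s \<in> carrier M" and t: "t \<in> carrier M" and "i < m"
  shows "coords R M m v (s \<oplus>\<^bsub>M\<^esub> t) i = coords R M m v s i \<oplus>\<^bsub>R\<^esub> coords R M m v t i"
proof -
  have "s \<oplus>\<^bsub>M\<^esub> t = lincomb M m (\<lambda>i. coords R M m v s i \<oplus>\<^bsub>R\<^esub> coords R M m v t i) v"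
    using lincomb_add[OF coords_in_carrier[OF s] coords_in_carrier[OF t] basis_closed]
    by (simp add: lincomb_coords s t)
  then show ?thesis
    using coords_lincomb[of "\<lambda>i. coords R M m v s i \<oplus>\<^bsub>R\<^esub> coords R M m v t i"] \<open>i < m\<close>
      coords_in_carrier[OF s] coords_in_carrier[OF t] by (auto simp: Pi_iff)
qed

lemma coords_smult:
  assumes a: "a \<in> carrier R" and s: "s \<in> carrier M" and "i < m"
  shows "coords R M m v (a \<odot>\<^bsub>M\<^esub> s) i = a \<otimes>\<^bsub>R\<^esub> coords R M m v s i"
proof -
  have "a \<odot>\<^bsub>M\<^esub> s = lincomb M m (\<lambda>i. a \<otimes>\<^bsub>R\<^esub> coords R M m v s i) v"
    using lincomb_smult[OF a coords_in_carrier[OF s] basis_closed] by (simp add: lincomb_coords s)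
  then show ?thesis
    using coords_lincomb[of "\<lambda>i. a \<otimes>\<^bsub>R\<^esub> coords R M m v s i"] \<open>i < m\<close> a
      coords_in_carrier[OF s] by (auto simp: Pi_iff)
qed

end

end

section \<open>Splitting and extending free modules\<close>

lemma section_of_lifted_basis:
  assumes N: "module A N" and P: "module A P" and p: "linear_map A P N p"
    and l: "l \<in> {..<m} \<rightarrow> carrier P" and basis: "is_basis A N m (\<lambda>i. p (l i))"
  shows "linear_map A N P (\<lambda>s. lincomb P m (coords A N m (\<lambda>i. p (l i)) s) l)"
    and "s \<in> carrier N \<Longrightarrow> p (lincomb P m (coords A N m (\<lambda>i. p (l i)) s) l) = s"
proof -
  interpret N: module A N by fact
  interpret P: module A P by fact
  let ?co = "coords A N m (\<lambda>i. p (l i))"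
  note co = N.coords_in_carrier[OF basis] and co_add = N.coords_add[OF basis]
    and co_smult = N.coords_smult[OF basis]
  show "linear_map A N P (\<lambda>s. lincomb P m (?co s) l)"
    unfolding linear_map_def
  proof (intro conjI ballI)
    fix s t assume s: "s \<in> carrier N" and t: "t \<in> carrier N"
    show "lincomb P m (?co s) l \<in> carrier P" by (rule P.lincomb_closed[OF co[OF s] l])
    have "lincomb P m (?co (s \<oplus>\<^bsub>N\<^esub> t)) l = lincomb P m (\<lambda>i. ?co s i \<oplus>\<^bsub>A\<^esub> ?co t i) l"
      by (rule P.lincomb_cong[OF _ l]) (use co[OF s] co[OF t] co_add[OF s t] in auto)
    also have "\<dots> = lincomb P m (?co s) l \<oplus>\<^bsub>P\<^esub> lincomb P m (?co t) l"
      by (rule P.lincomb_add[OF co[OF s] co[OF t] l])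
    finally show "lincomb P m (?co (s \<oplus>\<^bsub>N\<^esub> t)) l = lincomb P m (?co s) l \<oplus>\<^bsub>P\<^esub> lincomb P m (?co t) l" .
  next
    fix a s assume a: "a \<in> carrier A" and s: "s \<in> carrier N"
    have "lincomb P m (?co (a \<odot>\<^bsub>N\<^esub> s)) l = lincomb P m (\<lambda>i. a \<otimes>\<^bsub>A\<^esub> ?co s i) l"
      by (rule P.lincomb_cong[OF _ l]) (use a co[OF s] co_smult[OF a s] in auto)
    also have "\<dots> = a \<odot>\<^bsub>P\<^esub> lincomb P m (?co s) l"
      by (rule P.lincomb_smult[OF a co[OF s] l, symmetric])
    finally show "lincomb P m (?co (a \<odot>\<^bsub>N\<^esub> s)) l = a \<odot>\<^bsub>P\<^esub> lincomb P m (?co s) l" .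
  qed
  assume s: "s \<in> carrier N"
  show "p (lincomb P m (?co s) l) = s"
    using linear_map_lincomb[OF P N p co[OF s] l] N.lincomb_coords[OF basis s] by simp
qed

locale module_extension =
  M: module A M + P: module A P + N: module A N for A M P N +
  fixes i p
  assumes i_linear: "linear_map A M P i" and i_inj: "inj_on i (carrier M)"
    and p_linear: "linear_map A P N p"
    and exact: "\<And>s. s \<in> carrier P \<Longrightarrow> p s = \<zero>\<^bsub>N\<^esub> \<longleftrightarrow> s \<in> i ` carrier M"
begin

lemma p_i_zero: "a \<in> carrier M \<Longrightarrow> p (i a) = \<zero>\<^bsub>N\<^esub>"
  using exact linear_mapD(1)[OF i_linear] by blast

context
  fixes m1 m0 :: nat and b l
  assumes b: "b \<in> {..<m1} \<rightarrow> carrier M" and l: "l \<in> {..<m0} \<rightarrow> carrier P"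
begin

lemma lincomb_extension:
  assumes c: "c \<in> {..<m1 + m0} \<rightarrow> carrier A"
  shows "lincomb P (m1 + m0) c (\<lambda>k. if k < m1 then i (b k) else l (k - m1))
      = i (lincomb M m1 c b) \<oplus>\<^bsub>P\<^esub> lincomb P m0 (\<lambda>j. c (m1 + j)) l"
proof -
  have c1: "c \<in> {..<m1} \<rightarrow> carrier A" and c0: "(\<lambda>j. c (m1 + j)) \<in> {..<m0} \<rightarrow> carrier A"
    using c by auto
  have ib: "(\<lambda>k. i (b k)) \<in> {..<m1} \<rightarrow> carrier P" using b linear_mapD(1)[OF i_linear] by auto
  let ?E = "\<lambda>k. if k < m1 then i (b k) else l (k - m1)"
  have "lincomb P (m1 + m0) c ?E = lincomb P m1 c ?E \<oplus>\<^bsub>P\<^esub> lincomb P m0 (\<lambda>j. c (m1 + j)) (\<lambda>j. ?E (m1 + j))"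
    by (rule P.lincomb_append[OF c]) (use ib l in \<open>auto simp: Pi_iff\<close>)
  also have "lincomb P m1 c ?E = i (lincomb M m1 c b)"
    using P.lincomb_cong[OF c1 ib, of c ?E] linear_map_lincomb[OF M.module_axioms P.module_axioms i_linear c1 b]
    by simp
  also have "lincomb P m0 (\<lambda>j. c (m1 + j)) (\<lambda>j. ?E (m1 + j)) = lincomb P m0 (\<lambda>j. c (m1 + j)) l"
    by (rule P.lincomb_cong[OF c0 l]) simp_all
  finally show ?thesis .
qed

lemma lincomb_extension_projection:
  assumes c: "c \<in> {..<m1 + m0} \<rightarrow> carrier A"
  shows "p (lincomb P (m1 + m0) c (\<lambda>k. if k < m1 then i (b k) else l (k - m1)))
      = lincomb N m0 (\<lambda>j. c (m1 + j)) (\<lambda>j. p (l j))"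
proof -
  have c1: "c \<in> {..<m1} \<rightarrow> carrier A" and c0: "(\<lambda>j. c (m1 + j)) \<in> {..<m0} \<rightarrow> carrier A"
    using c by auto
  have a: "lincomb M m1 c b \<in> carrier M" by (rule M.lincomb_closed[OF c1 b])
  have "p (i (lincomb M m1 c b) \<oplus>\<^bsub>P\<^esub> lincomb P m0 (\<lambda>j. c (m1 + j)) l)
      = p (i (lincomb M m1 c b)) \<oplus>\<^bsub>N\<^esub> p (lincomb P m0 (\<lambda>j. c (m1 + j)) l)"
    using linear_mapD(1)[OF i_linear a] P.lincomb_closed[OF c0 l] by (intro linear_mapD(2)[OF p_linear])
  then show ?thesis
    using lincomb_extension[OF c] p_i_zero[OF a] linear_map_lincomb[OF P.module_axioms N.module_axioms p_linear c0 l]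
      N.lincomb_closed[of _ m0 "\<lambda>j. p (l j)"] c0 l linear_mapD(1)[OF p_linear]
    by (auto simp: Pi_iff)
qed

context
  assumes b_basis: "is_basis A M m1 b" and e_basis: "is_basis A N m0 (\<lambda>j. p (l j))"
begin

lemma extension_spans:
  assumes s: "s \<in> carrier P"
  shows "\<exists>c \<in> {..<m1 + m0} \<rightarrow> carrier A. s = lincomb P (m1 + m0) c (\<lambda>k. if k < m1 then i (b k) else l (k - m1))"
proof -
  define d where "d = coords A N m0 (\<lambda>j. p (l j)) (p s)"
  have d: "d \<in> {..<m0} \<rightarrow> carrier A"
    unfolding d_def by (rule N.coords_in_carrier[OF e_basis linear_mapD(1)[OF p_linear s]])
  define s0 where "s0 = lincomb P m0 d l"
  have s0: "s0 \<in> carrier P" unfolding s0_def by (rule P.lincomb_closed[OF d l])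
  have "p s0 = p s"
    using linear_map_lincomb[OF P.module_axioms N.module_axioms p_linear d l]
      N.lincomb_coords[OF e_basis linear_mapD(1)[OF p_linear s]]
    unfolding s0_def d_def by simp
  then have "p (s \<ominus>\<^bsub>P\<^esub> s0) = \<zero>\<^bsub>N\<^esub>"
    using linear_map_minus[OF P.module_axioms N.module_axioms p_linear s s0] linear_mapD(1)[OF p_linear s]
    by (simp add: N.r_neg N.minus_eq)
  then obtain a where a: "a \<in> carrier M" and ia: "i a = s \<ominus>\<^bsub>P\<^esub> s0" using exact s s0 by force
  define c where "c = coords A M m1 b a"
  have c: "c \<in> {..<m1} \<rightarrow> carrier A" unfolding c_def by (rule M.coords_in_carrier[OF b_basis a])
  define cd where "cd = (\<lambda>k. if k < m1 then c k else d (k - m1))"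
  have cd: "cd \<in> {..<m1 + m0} \<rightarrow> carrier A" using c d by (auto simp: cd_def Pi_iff)
  have "lincomb M m1 cd b = a"
    using M.lincomb_cong[OF c b, of cd b] M.lincomb_coords[OF b_basis a] by (simp add: cd_def c_def)
  moreover have "lincomb P m0 (\<lambda>j. cd (m1 + j)) l = s0"
    unfolding s0_def by (rule P.lincomb_cong[OF d l]) (simp_all add: cd_def)
  ultimately have "lincomb P (m1 + m0) cd (\<lambda>k. if k < m1 then i (b k) else l (k - m1)) = s"
    using lincomb_extension[OF cd] ia s s0 by (simp add: P.minus_eq P.a_assoc P.l_neg)
  then show ?thesis using cd by metis
qed

lemma extension_coeffs_eq:
  assumes c: "c \<in> {..<m1 + m0} \<rightarrow> carrier A" and c': "c' \<in> {..<m1 + m0} \<rightarrow> carrier A"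
    and eq: "lincomb P (m1 + m0) c (\<lambda>k. if k < m1 then i (b k) else l (k - m1))
      = lincomb P (m1 + m0) c' (\<lambda>k. if k < m1 then i (b k) else l (k - m1))"
    and k: "k < m1 + m0"
  shows "c k = c' k"
proof -
  have c0: "(\<lambda>j. c (m1 + j)) \<in> {..<m0} \<rightarrow> carrier A" "(\<lambda>j. c' (m1 + j)) \<in> {..<m0} \<rightarrow> carrier A"
    and c1: "c \<in> {..<m1} \<rightarrow> carrier A" "c' \<in> {..<m1} \<rightarrow> carrier A"
    using c c' by auto
  have high: "c (m1 + j) = c' (m1 + j)" if "j < m0" for j
    using N.basis_coeffs_eq[OF e_basis c0 _ that] eq
      lincomb_extension_projection[OF c] lincomb_extension_projection[OF c'] by simp
  then have "lincomb P m0 (\<lambda>j. c (m1 + j)) l = lincomb P m0 (\<lambda>j. c' (m1 + j)) l"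
    by (intro P.lincomb_cong[OF c0(2) l]) simp_all
  then have "i (lincomb M m1 c b) = i (lincomb M m1 c' b)"
    using eq lincomb_extension[OF c] lincomb_extension[OF c'] linear_mapD(1)[OF i_linear]
      M.lincomb_closed[OF _ b] P.lincomb_closed[OF c0(2) l] c1 by (metis P.add.right_cancel)
  then have "lincomb M m1 c b = lincomb M m1 c' b"
    using i_inj M.lincomb_closed[OF _ b] c1 by (auto dest: inj_onD)
  then have low: "c k = c' k" if "k < m1" for k
    by (rule M.basis_coeffs_eq[OF b_basis c1 _ that])
  show ?thesis
    using low high[of "k - m1"] k by (cases "k < m1") auto
qed

lemma is_basis_extension:
  "is_basis A P (m1 + m0) (\<lambda>k. if k < m1 then i (b k) else l (k - m1))"
proof (rule P.is_basisI)
  show "(\<lambda>k. if k < m1 then i (b k) else l (k - m1)) \<in> {..<m1 + m0} \<rightarrow> carrier P"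
    using b l linear_mapD(1)[OF i_linear] by (auto simp: Pi_iff)
qed (erule extension_spans, erule (3) extension_coeffs_eq)

end

end

end

section \<open>Sheaves of modules\<close>

lemma presheafD:
  assumes "presheaf C F rs" "X \<in> Ob C" "Y \<in> Ob C" "f \<in> Hom C Y X" "s \<in> F X"
  shows "rs X Y f s \<in> F Y"
    and "Z \<in> Ob C \<Longrightarrow> g \<in> Hom C Z Y \<Longrightarrow> rs X Z (cmp C f g) s = rs Y Z g (rs X Y f s)"
  using assms unfolding presheaf_def by blast+

lemma sheaf_glue_unique:
  assumes "sheaf C F rs" "X \<in> Ob C" "S \<in> Cov C X" "matching_family C F rs S fam"
  shows "\<exists>!t. t \<in> F X \<and> (\<forall>(Y, f)\<in>S. rs X Y f t = fam Y f)"
  using assms unfolding sheaf_def by blast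

lemma module_sheafD:
  assumes "module_sheaf C R M" "X \<in> Ob C"
  shows "module (rng R X) (mdl M X)"
    and "sheaf C (\<lambda>X. carrier (mdl M X)) (mrs M)"
  using assms unfolding module_sheaf_def by blast+

lemma module_sheaf_restrict:
  assumes "module_sheaf C R M" "X \<in> Ob C" "Y \<in> Ob C" "f \<in> Hom C Y X"
  shows "x \<in> carrier (mdl M X) \<Longrightarrow> mrs M X Y f x \<in> carrier (mdl M Y)"
    and "x \<in> carrier (mdl M X) \<Longrightarrow> y \<in> carrier (mdl M X) \<Longrightarrow>
      mrs M X Y f (x \<oplus>\<^bsub>mdl M X\<^esub> y) = mrs M X Y f x \<oplus>\<^bsub>mdl M Y\<^esub> mrs M X Y f y"
    and "a \<in> carrier (rng R X) \<Longrightarrow> x \<in> carrier (mdl M X) \<Longrightarrow>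
      mrs M X Y f (a \<odot>\<^bsub>mdl M X\<^esub> x) = rrs R X Y f a \<odot>\<^bsub>mdl M Y\<^esub> mrs M X Y f x"
proof -
  have psh: "presheaf C (\<lambda>X. carrier (mdl M X)) (mrs M)"
    using assms(1) unfolding module_sheaf_def sheaf_def by blast
  show "x \<in> carrier (mdl M X) \<Longrightarrow> mrs M X Y f x \<in> carrier (mdl M Y)"
    by (rule presheafD(1)[OF psh assms(2-4)])
  show "x \<in> carrier (mdl M X) \<Longrightarrow> y \<in> carrier (mdl M X) \<Longrightarrow>
      mrs M X Y f (x \<oplus>\<^bsub>mdl M X\<^esub> y) = mrs M X Y f x \<oplus>\<^bsub>mdl M Y\<^esub> mrs M X Y f y"
    and "a \<in> carrier (rng R X) \<Longrightarrow> x \<in> carrier (mdl M X) \<Longrightarrow>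
      mrs M X Y f (a \<odot>\<^bsub>mdl M X\<^esub> x) = rrs R X Y f a \<odot>\<^bsub>mdl M Y\<^esub> mrs M X Y f x"
    using assms unfolding module_sheaf_def by blast+
qed

lemma module_sheaf_restrict_cmp:
  assumes "module_sheaf C R M" "X \<in> Ob C" "Y \<in> Ob C" "Z \<in> Ob C" "f \<in> Hom C Y X" "g \<in> Hom C Z Y"
    and "s \<in> carrier (mdl M X)"
  shows "mrs M X Z (cmp C f g) s = mrs M Y Z g (mrs M X Y f s)"
proof -
  have psh: "presheaf C (\<lambda>X. carrier (mdl M X)) (mrs M)"
    using assms(1) unfolding module_sheaf_def sheaf_def by blast
  show ?thesis by (rule presheafD(2)[OF psh assms(2,3,5,7,4,6)])
qed

lemma ring_sheaf_restrict_closed: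
  assumes "ring_sheaf C R" "X \<in> Ob C" "Y \<in> Ob C" "f \<in> Hom C Y X" "a \<in> carrier (rng R X)"
  shows "rrs R X Y f a \<in> carrier (rng R Y)"
  using assms ring_hom_closed unfolding ring_sheaf_def by metis

lemma module_morphismD:
  assumes "module_morphism C R M N h" "X \<in> Ob C"
  shows "linear_map (rng R X) (mdl M X) (mdl N X) (h X)"
    and "Y \<in> Ob C \<Longrightarrow> f \<in> Hom C Y X \<Longrightarrow> s \<in> carrier (mdl M X) \<Longrightarrow>
      h Y (mrs M X Y f s) = mrs N X Y f (h X s)"
  using assms unfolding module_morphism_def by blast+

lemma short_exactD:
  assumes "short_exact C R A B D i p"
  shows "module_morphism C R A B i" "module_morphism C R B D p"
    and "X \<in> Ob C \<Longrightarrow> inj_on (i X) (carrier (mdl A X))"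
    and "X \<in> Ob C \<Longrightarrow> a \<in> carrier (mdl A X) \<Longrightarrow> p X (i X a) = \<zero>\<^bsub>mdl D X\<^esub>"
    and "X \<in> Ob C \<Longrightarrow> s \<in> carrier (mdl B X) \<Longrightarrow> p X s = \<zero>\<^bsub>mdl D X\<^esub> \<Longrightarrow>
      locally C X (\<lambda>Y f. mrs B X Y f s \<in> i Y ` carrier (mdl A Y))"
    and "X \<in> Ob C \<Longrightarrow> d \<in> carrier (mdl D X) \<Longrightarrow>
      locally C X (\<lambda>Y f. mrs D X Y f d \<in> p Y ` carrier (mdl B Y))"
  using assms unfolding short_exact_def by blast+

lemma module_sheaf_restrict_lincomb:
  assumes M: "module_sheaf C R M" and R: "ring_sheaf C R"
    and X: "X \<in> Ob C" and Y: "Y \<in> Ob C" and f: "f \<in> Hom C Y X"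
    and c: "c \<in> {..<m} \<rightarrow> carrier (rng R X)" and v: "v \<in> {..<m} \<rightarrow> carrier (mdl M X)"
  shows "mrs M X Y f (lincomb (mdl M X) m c v)
    = lincomb (mdl M Y) m (\<lambda>i. rrs R X Y f (c i)) (\<lambda>i. mrs M X Y f (v i))"
  by (rule semilinear_lincomb[OF module_sheafD(1)[OF M X] module_sheafD(1)[OF M Y]
        module_sheaf_restrict[OF M X Y f] ring_sheaf_restrict_closed[OF R X Y f] c v])

lemma sheaf_eq_if_locally_eq:
  assumes site: "is_site C" and sheaf: "sheaf C F rs" and X: "X \<in> Ob C" and S: "S \<in> Cov C X"
    and s: "s \<in> F X" and t: "t \<in> F X" and eq: "\<And>Y f. (Y, f) \<in> S \<Longrightarrow> rs X Y f s = rs X Y f t"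
  shows "s = t"
proof -
  have psh: "presheaf C F rs" using sheaf unfolding sheaf_def by blast
  note sv = is_sieveD[OF site_Cov_is_sieve[OF site X S]]
  have "matching_family C F rs S (\<lambda>Y f. rs X Y f s)"
    unfolding matching_family_def
  proof (intro ballI, clarify, intro conjI ballI)
    fix Y f assume "(Y, f) \<in> S"
    note restr = presheafD[OF psh X sv(1)[OF this] sv(2)[OF this] s]
    show "rs X Y f s \<in> F Y" by (rule restr(1))
    fix Z g assume "Z \<in> Ob C" "g \<in> Hom C Z Y"
    then show "rs Y Z g (rs X Y f s) = rs X Z (cmp C f g) s" by (simp add: restr(2))
  qed
  then have glue: "\<exists>!u. u \<in> F X \<and> (\<forall>(Y, f)\<in>S. rs X Y f u = rs X Y f s)"
    by (rule sheaf_glue_unique[OF sheaf X S])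
  have s': "s \<in> F X \<and> (\<forall>(Y, f)\<in>S. rs X Y f s = rs X Y f s)" using s by blast
  have t': "t \<in> F X \<and> (\<forall>(Y, f)\<in>S. rs X Y f t = rs X Y f s)" using t eq by fastforce
  show ?thesis using the1_equality[OF glue s'] the1_equality[OF glue t'] by simp
qed

lemma mono_locally_in_image:
  assumes site: "is_site C" and A: "module_sheaf C R A" and B: "module_sheaf C R B"
    and i: "module_morphism C R A B i" and inj: "\<And>X. X \<in> Ob C \<Longrightarrow> inj_on (i X) (carrier (mdl A X))"
    and X: "X \<in> Ob C" and s: "s \<in> carrier (mdl B X)"
    and loc: "locally C X (\<lambda>Y f. mrs B X Y f s \<in> i Y ` carrier (mdl A Y))"
  shows "s \<in> i X ` carrier (mdl A X)"
proof -
  define S where "S = {(Y, f). Y \<in> Ob C \<and> f \<in> Hom C Y X \<and> mrs B X Y f s \<in> i Y ` carrier (mdl A Y)}"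
  have S: "S \<in> Cov C X" using loc unfolding locally_def S_def .
  note sv = is_sieveD[OF site_Cov_is_sieve[OF site X S]]
  define pre where "pre Y f = (THE a. a \<in> carrier (mdl A Y) \<and> i Y a = mrs B X Y f s)" for Y f
  have pre: "pre Y f \<in> carrier (mdl A Y) \<and> i Y (pre Y f) = mrs B X Y f s" if "(Y, f) \<in> S" for Y f
    unfolding pre_def
    by (rule theI') (use that inj[OF sv(1)[OF that]] in \<open>auto simp: S_def inj_on_def\<close>)
  txt \<open>The local preimages are unique, hence compatible, so they glue.\<close>
  have "matching_family C (\<lambda>X. carrier (mdl A X)) (mrs A) S pre"
    unfolding matching_family_def
  proof (intro ballI, clarify, intro conjI ballI)
    fix Y f assume Yf: "(Y, f) \<in> S"
    show "pre Y f \<in> carrier (mdl A Y)" using pre[OF Yf] by blast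
    fix Z g assume Z: "Z \<in> Ob C" and g: "g \<in> Hom C Z Y"
    note Y = sv(1)[OF Yf] and f = sv(2)[OF Yf] and Zfg = sv(3)[OF Yf Z g]
    have "i Z (mrs A Y Z g (pre Y f)) = mrs B Y Z g (mrs B X Y f s)"
      using module_morphismD(2)[OF i Y Z g] pre[OF Yf] by auto
    also have "\<dots> = i Z (pre Z (cmp C f g))"
      using module_sheaf_restrict_cmp[OF B X Y Z f g s] pre[OF Zfg] by simp
    finally show "mrs A Y Z g (pre Y f) = pre Z (cmp C f g)"
      using inj_onD[OF inj[OF Z]] module_sheaf_restrict(1)[OF A Y Z g] pre[OF Yf] pre[OF Zfg] by blast
  qed
  then obtain a where a: "a \<in> carrier (mdl A X)" and glue: "\<And>Y f. (Y, f) \<in> S \<Longrightarrow> mrs A X Y f a = pre Y f"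
    using sheaf_glue_unique[OF module_sheafD(2)[OF A X] X S] by blast
  have "i X a = s"
  proof (rule sheaf_eq_if_locally_eq[OF site module_sheafD(2)[OF B X] X S])
    show "i X a \<in> carrier (mdl B X)" by (rule linear_mapD(1)[OF module_morphismD(1)[OF i X] a])
    fix Y f assume Yf: "(Y, f) \<in> S"
    show "mrs B X Y f (i X a) = mrs B X Y f s"
      using module_morphismD(2)[OF i X sv(1,2)[OF Yf] a] glue[OF Yf] pre[OF Yf] by simp
  qed (rule s)
  then show ?thesis using a by blast
qed

section \<open>Local bases\<close>

definition basis_on :: "('o, 'a) site \<Rightarrow> ('o, 'a, 'r) ringsheaf \<Rightarrow> ('o, 'a, 'r, 'v) modsheaf
    \<Rightarrow> nat \<Rightarrow> 'o \<Rightarrow> (nat \<Rightarrow> 'v) \<Rightarrow> bool" where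
  "basis_on C R M m U e \<longleftrightarrow> e \<in> {..<m} \<rightarrow> carrier (mdl M U) \<and>
     (\<forall>X\<in>Ob C. \<forall>u\<in>Hom C X U. is_basis (rng R X) (mdl M X) m (\<lambda>i. mrs M U X u (e i)))"

lemma free_on_iff_basis_on:
  assumes M: "module_sheaf C R M" and U: "U \<in> Ob C"
  shows "free_on C R M m U \<longleftrightarrow> (\<exists>e. basis_on C R M m U e)"
  unfolding free_on_def basis_on_def
proof (intro ex_cong1)
  fix e
  show "(\<forall>i<m. e i \<in> carrier (mdl M U)) \<and>
      (\<forall>X\<in>Ob C. \<forall>u\<in>Hom C X U. \<forall>s\<in>carrier (mdl M X). \<exists>!c. c \<in> {..<m} \<rightarrow>\<^sub>E carrier (rng R X) \<and>
         s = (\<Oplus>\<^bsub>mdl M X\<^esub>i\<in>{..<m}. c i \<odot>\<^bsub>mdl M X\<^esub> mrs M U X u (e i)))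
    \<longleftrightarrow> e \<in> {..<m} \<rightarrow> carrier (mdl M U) \<and>
      (\<forall>X\<in>Ob C. \<forall>u\<in>Hom C X U. is_basis (rng R X) (mdl M X) m (\<lambda>i. mrs M U X u (e i)))"
  proof (cases "e \<in> {..<m} \<rightarrow> carrier (mdl M U)")
    case True
    have "(\<lambda>i. mrs M U X u (e i)) \<in> {..<m} \<rightarrow> carrier (mdl M X)" if "X \<in> Ob C" "u \<in> Hom C X U" for X u
      using True that module_sheaf_restrict(1)[OF M U] by auto
    then show ?thesis using True unfolding is_basis_def lincomb_def by (simp add: Pi_iff)
  qed (auto simp: Pi_iff)
qed

lemma basis_on_cong:
  assumes M: "module_sheaf C R M" and eq: "\<And>i. i < m \<Longrightarrow> e i = e' i"
  shows "basis_on C R M m U e \<longleftrightarrow> basis_on C R M m U e'"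
proof -
  have "is_basis (rng R X) (mdl M X) m (\<lambda>i. mrs M U X u (e i)) \<longleftrightarrow>
      is_basis (rng R X) (mdl M X) m (\<lambda>i. mrs M U X u (e' i))" if "X \<in> Ob C" for X u
    by (rule module.is_basis_cong[OF module_sheafD(1)[OF M that]]) (simp add: eq)
  moreover have "e \<in> {..<m} \<rightarrow> carrier (mdl M U) \<longleftrightarrow> e' \<in> {..<m} \<rightarrow> carrier (mdl M U)"
    using eq by (simp add: Pi_iff)
  ultimately show ?thesis unfolding basis_on_def by simp
qed

lemma basis_on_pullback:
  assumes site: "is_site C" and M: "module_sheaf C R M" and U: "U \<in> Ob C" and V: "V \<in> Ob C"
    and f: "f \<in> Hom C V U" and basis: "basis_on C R M m U e"
  shows "basis_on C R M m V (\<lambda>i. mrs M U V f (e i))"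
  unfolding basis_on_def
proof (intro conjI ballI)
  have e: "e \<in> {..<m} \<rightarrow> carrier (mdl M U)" using basis unfolding basis_on_def by blast
  then show "(\<lambda>i. mrs M U V f (e i)) \<in> {..<m} \<rightarrow> carrier (mdl M V)"
    using module_sheaf_restrict(1)[OF M U V f] by auto
  fix X u assume X: "X \<in> Ob C" and u: "u \<in> Hom C X V"
  have fu: "cmp C f u \<in> Hom C X U" by (rule site_cmp_in_Hom[OF site X V U u f])
  have "is_basis (rng R X) (mdl M X) m (\<lambda>i. mrs M U X (cmp C f u) (e i))"
    using basis X fu unfolding basis_on_def by blast
  then show "is_basis (rng R X) (mdl M X) m (\<lambda>i. mrs M V X u (mrs M U V f (e i)))"
    by (rule module.is_basis_transfer[OF module_sheafD(1)[OF M X]])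
      (use module_sheaf_restrict_cmp[OF M U V X f u] e in \<open>auto simp: Pi_iff\<close>)
qed

definition lifted_basis_on :: "('o, 'a) site \<Rightarrow> ('o, 'a, 'r) ringsheaf \<Rightarrow> ('o, 'a, 'r, 'p) modsheaf
    \<Rightarrow> ('o, 'a, 'r, 'n) modsheaf \<Rightarrow> ('o \<Rightarrow> 'p \<Rightarrow> 'n) \<Rightarrow> nat \<Rightarrow> 'o \<Rightarrow> (nat \<Rightarrow> 'p) \<Rightarrow> bool" where
  "lifted_basis_on C R P N p m U l \<longleftrightarrow>
     l \<in> {..<m} \<rightarrow> carrier (mdl P U) \<and> basis_on C R N m U (\<lambda>i. p U (l i))"

lemma lifted_basis_on_restrict:
  assumes P: "module_sheaf C R P" and N: "module_sheaf C R N" and p: "module_morphism C R P N p"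
    and lifted: "lifted_basis_on C R P N p m U l"
    and U: "U \<in> Ob C" and X: "X \<in> Ob C" and u: "u \<in> Hom C X U"
  shows "(\<lambda>i. mrs P U X u (l i)) \<in> {..<m} \<rightarrow> carrier (mdl P X)"
    and "is_basis (rng R X) (mdl N X) m (\<lambda>i. p X (mrs P U X u (l i)))"
proof -
  have l: "l \<in> {..<m} \<rightarrow> carrier (mdl P U)"
    and b: "is_basis (rng R X) (mdl N X) m (\<lambda>i. mrs N U X u (p U (l i)))"
    using lifted X u unfolding lifted_basis_on_def basis_on_def by blast+
  show "is_basis (rng R X) (mdl N X) m (\<lambda>i. p X (mrs P U X u (l i)))"
    by (rule module.is_basis_transfer[OF module_sheafD(1)[OF N X] b])
      (use module_morphismD(2)[OF p U X u] l in \<open>auto simp: Pi_iff\<close>)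
  show "(\<lambda>i. mrs P U X u (l i)) \<in> {..<m} \<rightarrow> carrier (mdl P X)"
    using l module_sheaf_restrict(1)[OF P U X u] by auto
qed

lemma lifted_basis_on_pullback:
  assumes site: "is_site C" and P: "module_sheaf C R P" and N: "module_sheaf C R N"
    and p: "module_morphism C R P N p" and U: "U \<in> Ob C" and V: "V \<in> Ob C" and f: "f \<in> Hom C V U"
    and lifted: "lifted_basis_on C R P N p m U l"
  shows "lifted_basis_on C R P N p m V (\<lambda>i. mrs P U V f (l i))"
proof -
  have l: "l \<in> {..<m} \<rightarrow> carrier (mdl P U)" and b: "basis_on C R N m U (\<lambda>i. p U (l i))"
    using lifted unfolding lifted_basis_on_def by blast+
  have "basis_on C R N m V (\<lambda>i. mrs N U V f (p U (l i)))"
    by (rule basis_on_pullback[OF site N U V f b])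
  moreover have "mrs N U V f (p U (l i)) = p V (mrs P U V f (l i))" if "i < m" for i
    using module_morphismD(2)[OF p U V f, of "l i"] l that by (auto simp: Pi_iff)
  ultimately have "basis_on C R N m V (\<lambda>i. p V (mrs P U V f (l i)))"
    using basis_on_cong[OF N, of m "\<lambda>i. mrs N U V f (p U (l i))" "\<lambda>i. p V (mrs P U V f (l i))" V]
    by blast
  then show ?thesis
    using l module_sheaf_restrict(1)[OF P U V f] unfolding lifted_basis_on_def by auto
qed

lemma free_on_pullback:
  assumes site: "is_site C" and M: "module_sheaf C R M" and U: "U \<in> Ob C" and V: "V \<in> Ob C"
    and f: "f \<in> Hom C V U" and "free_on C R M m U"
  shows "free_on C R M m V"
  using assms(6) basis_on_pullback[OF site M U V f]
  unfolding free_on_iff_basis_on[OF M U] free_on_iff_basis_on[OF M V] by blast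

lemma coords_restrict:
  assumes M: "module_sheaf C R M" and R: "ring_sheaf C R"
    and X: "X \<in> Ob C" and Y: "Y \<in> Ob C" and g: "g \<in> Hom C Y X"
    and basis: "is_basis (rng R X) (mdl M X) m v" and basis': "is_basis (rng R Y) (mdl M Y) m v'"
    and v': "\<And>i. i < m \<Longrightarrow> v' i = mrs M X Y g (v i)"
    and s: "s \<in> carrier (mdl M X)" and "i < m"
  shows "coords (rng R Y) (mdl M Y) m v' (mrs M X Y g s) i
    = rrs R X Y g (coords (rng R X) (mdl M X) m v s i)"
proof -
  interpret MX: module "rng R X" "mdl M X" by (rule module_sheafD(1)[OF M X])
  interpret MY: module "rng R Y" "mdl M Y" by (rule module_sheafD(1)[OF M Y])
  let ?c = "coords (rng R X) (mdl M X) m v s"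
  have c: "?c \<in> {..<m} \<rightarrow> carrier (rng R X)" by (rule MX.coords_in_carrier[OF basis s])
  have rc: "(\<lambda>i. rrs R X Y g (?c i)) \<in> {..<m} \<rightarrow> carrier (rng R Y)"
    using c ring_sheaf_restrict_closed[OF R X Y g] by auto
  have "mrs M X Y g s = mrs M X Y g (lincomb (mdl M X) m ?c v)"
    using MX.lincomb_coords[OF basis s] by simp
  also have "\<dots> = lincomb (mdl M Y) m (\<lambda>i. rrs R X Y g (?c i)) (\<lambda>i. mrs M X Y g (v i))"
    by (rule module_sheaf_restrict_lincomb[OF M R X Y g c MX.basis_closed[OF basis]])
  also have "\<dots> = lincomb (mdl M Y) m (\<lambda>i. rrs R X Y g (?c i)) v'"
    by (rule MY.lincomb_cong[OF rc MY.basis_closed[OF basis']]) (simp_all add: v')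
  finally show ?thesis using MY.coords_lincomb[OF basis' rc \<open>i < m\<close>] by simp
qed

definition lift_section :: "('o, 'a, 'r) ringsheaf \<Rightarrow> ('o, 'a, 'r, 'p) modsheaf \<Rightarrow> ('o, 'a, 'r, 'n) modsheaf
    \<Rightarrow> ('o \<Rightarrow> 'p \<Rightarrow> 'n) \<Rightarrow> nat \<Rightarrow> 'o \<Rightarrow> (nat \<Rightarrow> 'p) \<Rightarrow> 'o \<Rightarrow> 'a \<Rightarrow> 'n \<Rightarrow> 'p" where
  "lift_section R P N p m U l X u s = lincomb (mdl P X) m
     (coords (rng R X) (mdl N X) m (\<lambda>i. p X (mrs P U X u (l i))) s) (\<lambda>i. mrs P U X u (l i))"

lemma lift_section_is_section:
  assumes P: "module_sheaf C R P" and N: "module_sheaf C R N" and p: "module_morphism C R P N p"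
    and lifted: "lifted_basis_on C R P N p m U l"
    and U: "U \<in> Ob C" and X: "X \<in> Ob C" and u: "u \<in> Hom C X U"
  shows "linear_map (rng R X) (mdl N X) (mdl P X) (lift_section R P N p m U l X u)"
    and "s \<in> carrier (mdl N X) \<Longrightarrow> p X (lift_section R P N p m U l X u s) = s"
  using section_of_lifted_basis[OF module_sheafD(1)[OF N X] module_sheafD(1)[OF P X]
      module_morphismD(1)[OF p X] lifted_basis_on_restrict[OF P N p lifted U X u]]
  unfolding lift_section_def by blast+

lemma lift_section_natural:
  assumes site: "is_site C" and R: "ring_sheaf C R" and P: "module_sheaf C R P"
    and N: "module_sheaf C R N" and p: "module_morphism C R P N p"
    and lifted: "lifted_basis_on C R P N p m U l" and U: "U \<in> Ob C"
    and X: "X \<in> Ob C" and Y: "Y \<in> Ob C" and u: "u \<in> Hom C X U" and g: "g \<in> Hom C Y X"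
    and s: "s \<in> carrier (mdl N X)"
  shows "lift_section R P N p m U l Y (cmp C u g) (mrs N X Y g s)
    = mrs P X Y g (lift_section R P N p m U l X u s)"
proof -
  interpret NX: module "rng R X" "mdl N X" by (rule module_sheafD(1)[OF N X])
  interpret PY: module "rng R Y" "mdl P Y" by (rule module_sheafD(1)[OF P Y])
  have ug: "cmp C u g \<in> Hom C Y U" by (rule site_cmp_in_Hom[OF site Y X U g u])
  note restrX = lifted_basis_on_restrict[OF P N p lifted U X u]
    and restrY = lifted_basis_on_restrict[OF P N p lifted U Y ug]
  let ?c = "coords (rng R X) (mdl N X) m (\<lambda>i. p X (mrs P U X u (l i))) s"
  have l: "l i \<in> carrier (mdl P U)" if "i < m" for i
    using lifted that unfolding lifted_basis_on_def by auto
  have lY: "mrs P U Y (cmp C u g) (l i) = mrs P X Y g (mrs P U X u (l i))" if "i < m" for i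
    by (rule module_sheaf_restrict_cmp[OF P U X Y u g l[OF that]])
  have eY: "p Y (mrs P U Y (cmp C u g) (l i)) = mrs N X Y g (p X (mrs P U X u (l i)))" if "i < m" for i
    using lY[OF that] module_morphismD(2)[OF p X Y g] restrX(1) that by auto
  have c: "?c \<in> {..<m} \<rightarrow> carrier (rng R X)" by (rule NX.coords_in_carrier[OF restrX(2) s])
  have rc: "(\<lambda>i. rrs R X Y g (?c i)) \<in> {..<m} \<rightarrow> carrier (rng R Y)"
    using c ring_sheaf_restrict_closed[OF R X Y g] by auto
  have "lift_section R P N p m U l Y (cmp C u g) (mrs N X Y g s)
      = lincomb (mdl P Y) m (\<lambda>i. rrs R X Y g (?c i)) (\<lambda>i. mrs P X Y g (mrs P U X u (l i)))"
    unfolding lift_section_def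
    by (rule PY.lincomb_cong[OF rc])
      (use restrX(1) module_sheaf_restrict(1)[OF P X Y g] lY
         coords_restrict[OF N R X Y g restrX(2) restrY(2) eY s] in auto)
  also have "\<dots> = mrs P X Y g (lift_section R P N p m U l X u s)"
    unfolding lift_section_def
    by (rule module_sheaf_restrict_lincomb[OF P R X Y g c restrX(1), symmetric])
  finally show ?thesis .
qed

lemma splits_on_if_lifted_basis:
  assumes site: "is_site C" and R: "ring_sheaf C R" and P: "module_sheaf C R P" and N: "module_sheaf C R N"
    and p: "module_morphism C R P N p" and U: "U \<in> Ob C" and lifted: "lifted_basis_on C R P N p m U l"
  shows "splits_on C R P N p U"
  unfolding splits_on_def
  using lift_section_is_section[OF P N p lifted U] lift_section_natural[OF site R P N p lifted U]
  by blast

lemma short_exact_module_extension: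
  assumes site: "is_site C" and A: "module_sheaf C R A" and B: "module_sheaf C R B"
    and D: "module_sheaf C R D" and exact: "short_exact C R A B D i p" and X: "X \<in> Ob C"
  shows "module_extension (rng R X) (mdl A X) (mdl B X) (mdl D X) (i X) (p X)"
proof -
  note i = short_exactD(1)[OF exact] and inj = short_exactD(3)[OF exact]
  have "p X s = \<zero>\<^bsub>mdl D X\<^esub> \<longleftrightarrow> s \<in> i X ` carrier (mdl A X)" if s: "s \<in> carrier (mdl B X)" for s
    using short_exactD(4)[OF exact X] mono_locally_in_image[OF site A B i inj X s]
      short_exactD(5)[OF exact X s] by blast
  then show ?thesis
    unfolding module_extension_def module_extension_axioms_def
    using module_sheafD(1)[OF A X] module_sheafD(1)[OF B X] module_sheafD(1)[OF D X]
      module_morphismD(1)[OF i X] inj[OF X] module_morphismD(1)[OF short_exactD(2)[OF exact] X]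
    by blast
qed

lemma basis_on_extension:
  assumes site: "is_site C" and A: "module_sheaf C R A" and P: "module_sheaf C R P"
    and N: "module_sheaf C R N" and exact: "short_exact C R A P N i p" and U: "U \<in> Ob C"
    and b: "basis_on C R A m1 U b" and lifted: "lifted_basis_on C R P N p m0 U l"
  shows "basis_on C R P (m1 + m0) U (\<lambda>k. if k < m1 then i U (b k) else l (k - m1))"
  unfolding basis_on_def
proof (intro conjI ballI)
  note i = short_exactD(1)[OF exact] and p = short_exactD(2)[OF exact]
  have b_closed: "b \<in> {..<m1} \<rightarrow> carrier (mdl A U)" and l: "l \<in> {..<m0} \<rightarrow> carrier (mdl P U)"
    using b lifted unfolding basis_on_def lifted_basis_on_def by blast+
  then show "(\<lambda>k. if k < m1 then i U (b k) else l (k - m1)) \<in> {..<m1 + m0} \<rightarrow> carrier (mdl P U)"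
    using linear_mapD(1)[OF module_morphismD(1)[OF i U]] by (auto simp: Pi_iff)
  fix X u assume X: "X \<in> Ob C" and u: "u \<in> Hom C X U"
  have bX: "is_basis (rng R X) (mdl A X) m1 (\<lambda>k. mrs A U X u (b k))"
    using b X u unfolding basis_on_def by blast
  note lX = lifted_basis_on_restrict[OF P N p lifted U X u]
  have "is_basis (rng R X) (mdl P X) (m1 + m0)
      (\<lambda>k. if k < m1 then i X (mrs A U X u (b k)) else mrs P U X u (l (k - m1)))"
    by (rule module_extension.is_basis_extension[OF short_exact_module_extension[OF site A P N exact X]
          module.basis_closed[OF module_sheafD(1)[OF A X] bX] lX(1) bX lX(2)])
  then show "is_basis (rng R X) (mdl P X) (m1 + m0)
      (\<lambda>k. mrs P U X u (if k < m1 then i U (b k) else l (k - m1)))"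
    by (rule module.is_basis_transfer[OF module_sheafD(1)[OF P X]])
      (use module_morphismD(2)[OF i U X u] b_closed in \<open>auto simp: Pi_iff\<close>)
qed

lemma gen_cover_lifted_basis:
  assumes site: "is_site C" and P: "module_sheaf C R P" and N: "module_sheaf C R N"
    and p: "module_morphism C R P N p"
    and epi: "\<And>X s. X \<in> Ob C \<Longrightarrow> s \<in> carrier (mdl N X) \<Longrightarrow>
      locally C X (\<lambda>Y f. mrs N X Y f s \<in> p Y ` carrier (mdl P Y))"
    and free: "locally_free_rank C R N m"
  shows "gen_cover C {Y \<in> Ob C. \<exists>l. lifted_basis_on C R P N p m Y l}"
proof -
  obtain \<U> where cover: "gen_cover C \<U>" and free_U: "\<And>U. U \<in> \<U> \<Longrightarrow> free_on C R N m U"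
    using free unfolding locally_free_rank_def by blast
  have UOb: "U \<in> Ob C" if "U \<in> \<U>" for U using cover that unfolding gen_cover_def by blast
  define e where "e U = (SOME e. basis_on C R N m U e)" for U
  have e: "basis_on C R N m U (e U)" if U: "U \<in> \<U>" for U
  proof -
    have "\<exists>e. basis_on C R N m U e" using free_U[OF U] free_on_iff_basis_on[OF N UOb[OF U]] by blast
    then show ?thesis unfolding e_def by (rule someI_ex)
  qed
  show ?thesis
  proof (rule gen_cover_refine[OF site cover])
    fix U assume U: "U \<in> \<U>"
    have "e U i \<in> carrier (mdl N U)" if "i < m" for i
      using e[OF U] that unfolding basis_on_def by auto
    then show "locally C U (\<lambda>Y f. \<forall>i<m. mrs N U Y f (e U i) \<in> p Y ` carrier (mdl P Y))"
      by (intro locally_all_lessI[OF site UOb[OF U]] epi[OF UOb[OF U]])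
  next
    fix U Y f assume U: "U \<in> \<U>" and Y: "Y \<in> Ob C" and f: "f \<in> Hom C Y U"
      and lifts: "\<forall>i<m. mrs N U Y f (e U i) \<in> p Y ` carrier (mdl P Y)"
    have "\<forall>i. \<exists>x. i < m \<longrightarrow> x \<in> carrier (mdl P Y) \<and> p Y x = mrs N U Y f (e U i)"
      using lifts by (metis imageE)
    then obtain l where l: "\<forall>i. i < m \<longrightarrow> l i \<in> carrier (mdl P Y) \<and> p Y (l i) = mrs N U Y f (e U i)"
      by (rule choice[THEN exE])
    have "basis_on C R N m Y (\<lambda>i. mrs N U Y f (e U i))"
      by (rule basis_on_pullback[OF site N UOb[OF U] Y f e[OF U]])
    then have "basis_on C R N m Y (\<lambda>i. p Y (l i))"
      using basis_on_cong[OF N, of m "\<lambda>i. p Y (l i)" "\<lambda>i. mrs N U Y f (e U i)" Y] l by simp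
    then have "lifted_basis_on C R P N p m Y l"
      using l unfolding lifted_basis_on_def by (simp add: Pi_iff)
    then show "Y \<in> {Y \<in> Ob C. \<exists>l. lifted_basis_on C R P N p m Y l}" using Y by blast
  qed blast
qed

theorem proposition8p6p3:
  fixes C :: "('o, 'a) site" and R :: "('o, 'a, 'r) ringsheaf"
    and Nm1 :: "('o, 'a, 'r, 'n1) modsheaf" and N0 :: "('o, 'a, 'r, 'n0) modsheaf"
    and Mm1 :: "('o, 'a, 'r, 'm1) modsheaf" and M0 :: "('o, 'a, 'r, 'm0) modsheaf"
    and P :: "('o, 'a, 'r, 'p) modsheaf"
    and dN :: "'o \<Rightarrow> 'n1 \<Rightarrow> 'n0" and dM :: "'o \<Rightarrow> 'm1 \<Rightarrow> 'm0"
    and kap :: "'o \<Rightarrow> 'n1 \<Rightarrow> 'p" and iota :: "'o \<Rightarrow> 'm1 \<Rightarrow> 'p"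
    and pi :: "'o \<Rightarrow> 'p \<Rightarrow> 'n0" and jay :: "'o \<Rightarrow> 'p \<Rightarrow> 'm0"
  assumes "is_site C" and "subcanonical C" and "ring_sheaf C R"
    and "module_sheaf C R Nm1" and "module_sheaf C R N0" and "module_morphism C R Nm1 N0 dN"
    and "module_sheaf C R Mm1" and "module_sheaf C R M0" and "module_morphism C R Mm1 M0 dM"
    and "locally_free C R Nm1" and "locally_free C R N0"
    and "locally_free C R Mm1" and "locally_free C R M0"
    and "butterfly C R Nm1 N0 dN Mm1 M0 dM P kap iota pi jay"
  shows "locally_split_butterfly C R P N0 pi \<and> locally_free C R P"
proof -
  note site = assms(1) and R = assms(3) and N0 = assms(5) and Mm1 = assms(7)
  have P: "module_sheaf C R P" and exact: "short_exact C R Mm1 P N0 iota pi"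
    using assms(14) unfolding butterfly_def by blast+
  note pi = short_exactD(2)[OF exact]
  obtain m0 where "locally_free_rank C R N0 m0" using assms(11) unfolding locally_free_def by blast
  from gen_cover_lifted_basis[OF site P N0 pi short_exactD(6)[OF exact] this]
  have lifted: "gen_cover C {Y \<in> Ob C. \<exists>l. lifted_basis_on C R P N0 pi m0 Y l}" .
  obtain m1 \<U> where "gen_cover C \<U>" and "\<And>U. U \<in> \<U> \<Longrightarrow> free_on C R Mm1 m1 U"
    using assms(12) unfolding locally_free_def locally_free_rank_def by blast
  from gen_cover_saturate[OF site this free_on_pullback[OF site Mm1]]
  have free: "gen_cover C {Y \<in> Ob C. free_on C R Mm1 m1 Y}" .
  have both: "gen_cover C {Y \<in> Ob C. (\<exists>l. lifted_basis_on C R P N0 pi m0 Y l) \<and> free_on C R Mm1 m1 Y}"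
    by (rule gen_cover_Int[OF site lifted free _ free_on_pullback[OF site Mm1]])
      (use lifted_basis_on_pullback[OF site P N0 pi] in blast)
  have "\<forall>Y \<in> {Y \<in> Ob C. \<exists>l. lifted_basis_on C R P N0 pi m0 Y l}. splits_on C R P N0 pi Y"
    using splits_on_if_lifted_basis[OF site R P N0 pi] by blast
  then have "locally_split_butterfly C R P N0 pi"
    using lifted unfolding locally_split_butterfly_def by blast
  moreover have "\<forall>Y \<in> {Y \<in> Ob C. (\<exists>l. lifted_basis_on C R P N0 pi m0 Y l) \<and> free_on C R Mm1 m1 Y}.
      free_on C R P (m1 + m0) Y"
    using basis_on_extension[OF site Mm1 P N0 exact] free_on_iff_basis_on[OF Mm1]
      free_on_iff_basis_on[OF P] by blast
  then have "locally_free C R P"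
    using both unfolding locally_free_def locally_free_rank_def by blast
  ultimately show ?thesis ..
qed

end
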